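(* Let $K$ be a virtual knot diagram and $n\geq 0$. Then $|C_n(K)|\geq \operatorname{span}V_K^n(t)$, where $\operatorname{span}$ denotes the difference between the highest and lowest exponents of $t$ occurring in the Laurent polynomial (in $t^{1/2}$) $V_K^n(t)$.
   Context: Virtual knot diagrams, real crossings with writhe $w(c)\in\{\pm1\}$, $w(K)=\sum_c w(c)$. Chord index: in the Gauss diagram (counterclockwise circle, one chord per real crossing directed from over- to under-preimage and signed by the writhe), for a chord $c$ let $r_\pm(c)$ (resp. $l_\pm(c)$) be the number of chords of sign $\pm$ whose endpoints interlace with those of $c$ and whose tail lies to the left (resp. right) of the arrow $c$ and head to the right (resp. left); $\mathrm{Ind}(c)=r_+(c)-r_-(c)-l_+(c)+l_-(c)$. For $n\geq 0$ let $C_n(K)=\{c \text{ real crossing}: \mathrm{Ind}(c)=kn \text{ for some } k\in\mathbb{Z}\}$. A state $S$ is obtained by smoothing every crossing of $C_n(K)$ by either the $0$-smoothing ($A$-smoothing of the Kauffman bracket) or the $1$-smoothing ($B$-smoothing), leaving all other crossings unchanged; $S$ is a virtual link diagram with $|S|$ components, and $\#_0,\#_1$ count the $0$- and $1$-smoothings used. $\langle K\rangle_n=\sum_S A^{\#_0-\#_1}(-A^2-A^{-2})^{|S|-1}$ and $V_K^n(t)=(-A^3)^{-w(K)}\langle K\rangle_n\big|_{A=t^{-1/4}}$. *)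

theory Defs
  imports Complex_Main "HOL-Library.FuncSet"
    "HOL-Computational_Algebra.Formal_Laurent_Series"
begin

(* A virtual knot diagram is encoded by its (signed, oriented) Gauss diagram.
   The knot is traversed in the counterclockwise direction of the Gauss circle;
   the 2m crossing preimages are the positions 0,...,2m-1 in order of traversal.
   Crossing c < m has over-preimage (tail of chord) ovr c, under-preimage
   (head of chord) und c, and writhe wr c. *)
record gauss =
  ncr :: nat
  ovr :: "nat \<Rightarrow> nat"
  und :: "nat \<Rightarrow> nat"
  wr  :: "nat \<Rightarrow> int"

definition npts :: "gauss \<Rightarrow> nat" where
  "npts G = 2 * ncr G"

definition crossings :: "gauss \<Rightarrow> nat set" where
  "crossings G = {..<ncr G}"

definition gauss_diagram :: "gauss \<Rightarrow> bool" where
  "gauss_diagram G \<longleftrightarrow>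
     (\<forall>c\<in>crossings G. ovr G c < npts G \<and> und G c < npts G \<and> wr G c \<in> {1, -1}) \<and>
     inj_on (\<lambda>(c, b). if b then ovr G c else und G c) (crossings G \<times> (UNIV :: bool set))"

definition cdist :: "gauss \<Rightarrow> nat \<Rightarrow> nat \<Rightarrow> int" where
  "cdist G a x = (int x - int a) mod int (npts G)"

definition right_of :: "gauss \<Rightarrow> nat \<Rightarrow> nat \<Rightarrow> bool" where
  "right_of G c x \<longleftrightarrow> 0 < cdist G (ovr G c) x \<and> cdist G (ovr G c) x < cdist G (ovr G c) (und G c)"

definition left_of :: "gauss \<Rightarrow> nat \<Rightarrow> nat \<Rightarrow> bool" where
  "left_of G c x \<longleftrightarrow> cdist G (ovr G c) (und G c) < cdist G (ovr G c) x"

definition chord_index :: "gauss \<Rightarrow> nat \<Rightarrow> int" where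
  "chord_index G c =
     (\<Sum>d\<in>crossings G - {c}.
        wr G d * ((if left_of G c (ovr G d) \<and> right_of G c (und G d) then 1 else 0)
                - (if right_of G c (ovr G d) \<and> left_of G c (und G d) then 1 else 0)))"

definition Cn :: "gauss \<Rightarrow> nat \<Rightarrow> nat set" where
  "Cn G n = {c \<in> crossings G. \<exists>k::int. chord_index G c = k * int n}"

definition writhe :: "gauss \<Rightarrow> int" where
  "writhe G = (\<Sum>c\<in>crossings G. wr G c)"

(* segments (arcs of the curve between consecutive crossing preimages):
   segment i runs from position i to position i+1 mod 2m *)
definition seg_in :: "gauss \<Rightarrow> nat \<Rightarrow> nat" where
  "seg_in G p = (p + npts G - 1) mod npts G"   (* segment ending at p *)

(* A state s assigns to each crossing of C a smoothing, 0 (A) or 1 (B).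
   For a positive crossing the 0-smoothing is the oriented (Seifert) one,
   for a negative crossing the 1-smoothing is the oriented one. *)
definition oriented_smoothing :: "gauss \<Rightarrow> (nat \<Rightarrow> nat) \<Rightarrow> nat \<Rightarrow> bool" where
  "oriented_smoothing G s c \<longleftrightarrow> (wr G c = 1 \<longleftrightarrow> s c = 0)"

definition glued :: "gauss \<Rightarrow> nat set \<Rightarrow> (nat \<Rightarrow> nat) \<Rightarrow> nat \<Rightarrow> nat \<Rightarrow> bool" where
  "glued G C s i j \<longleftrightarrow> (\<exists>c\<in>crossings G.
     (let ip = seg_in G (ovr G c); op = ovr G c; iq = seg_in G (und G c); oq = und G c in
      if c \<notin> C then (i, j) \<in> {(ip, op), (iq, oq)}
      else if oriented_smoothing G s c then (i, j) \<in> {(ip, oq), (iq, op)}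
      else (i, j) \<in> {(ip, iq), (op, oq)}))"

definition same_component :: "gauss \<Rightarrow> nat set \<Rightarrow> (nat \<Rightarrow> nat) \<Rightarrow> nat \<Rightarrow> nat \<Rightarrow> bool" where
  "same_component G C s = (\<lambda>i j. glued G C s i j \<or> glued G C s j i)\<^sup>*\<^sup>*"

definition ncomp :: "gauss \<Rightarrow> nat set \<Rightarrow> (nat \<Rightarrow> nat) \<Rightarrow> nat" where
  "ncomp G C s = (if ncr G = 0 then 1
     else card ({..<npts G} // {(i, j). same_component G C s i j}))"

definition bracket_n :: "gauss \<Rightarrow> nat \<Rightarrow> int fls" where
  "bracket_n G n = (\<Sum>s \<in> Cn G n \<rightarrow>\<^sub>E {0, 1}.
      fls_X_intpow (int (card {c \<in> Cn G n. s c = 0}) - int (card {c \<in> Cn G n. s c = 1}))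
      * (- (fls_X ^ 2) - fls_X_inv ^ 2) ^ (ncomp G (Cn G n) s - 1))"

definition jones_n_A :: "gauss \<Rightarrow> nat \<Rightarrow> int fls" where
  "jones_n_A G n = (-1) ^ nat \<bar>writhe G\<bar> * fls_X_intpow (-3 * writhe G) * bracket_n G n"

(* exponents of t occurring in V_K^n(t), obtained by substituting A = t^(-1/4) *)
definition t_exponents :: "int fls \<Rightarrow> real set" where
  "t_exponents f = {- real_of_int e / 4 | e. fls_nth f e \<noteq> 0}"

definition t_span :: "int fls \<Rightarrow> real" where
  "t_span f = (if f = 0 then 0 else Max (t_exponents f) - Min (t_exponents f))"

end

theory Submission
  imports Defs
begin

text \<open>
  A state \<open>S\<close> of the partially smoothed diagram is encoded by two fixed-point-free involutions
  on the \<open>4m\<close> ends of the segments between consecutive crossing points: one pairs the two ends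
  of each segment, the other pairs the ends that are joined at a crossing point. The components
  of \<open>S\<close> are the orbits of the group they generate. For two states \<open>S\<close>, \<open>S'\<close> the three
  involutions describe a closed surface, and Euler's inequality for it, together with a lower
  bound for the number of orbits of the two junction involutions (junction paths never leave a
  crossing) and an upper bound for the components of all three, gives
  \<open>|S| + |S'| + d(S, S') \<le> 2 + 2 |C\<^sub>n(K)|\<close>, where \<open>d\<close> counts the crossings smoothed
  differently. The term of \<open>S\<close> in \<open>\<langle>K\<rangle>\<^sub>n\<close> has \<open>A\<close>-degrees in \<open>#\<^sub>0 - #\<^sub>1 \<plusminus> 2(|S| - 1)\<close>
  and \<open>#\<^sub>0 - #\<^sub>1\<close> changes by at most \<open>2 d(S, S')\<close>, so any two \<open>A\<close>-degrees of \<open>V\<^sub>K\<^sup>n\<close> differ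
  by at most \<open>4 |C\<^sub>n(K)|\<close>, that is, by at most \<open>|C\<^sub>n(K)|\<close> in \<open>t\<close>.
\<close>

section \<open>Counting equivalence classes\<close>

lemma image_equiv_class:
  assumes eX: "equiv X rX" and eY: "equiv Y rY" and img: "h ` X = Y"
    and compat: "\<And>a b. a \<in> X \<Longrightarrow> b \<in> X \<Longrightarrow> (a, b) \<in> rX \<longleftrightarrow> (h a, h b) \<in> rY"
    and a: "a \<in> X"
  shows "h ` (rX `` {a}) = rY `` {h a}"
proof
  show "h ` (rX `` {a}) \<subseteq> rY `` {h a}"
  proof
    fix w assume "w \<in> h ` (rX `` {a})"
    then obtain b where b: "(a, b) \<in> rX" "w = h b" by auto
    then have "b \<in> X" using eX by (auto dest: equiv_type)
    with a b compat show "w \<in> rY `` {h a}" by auto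
  qed
  show "rY `` {h a} \<subseteq> h ` (rX `` {a})"
  proof
    fix w assume w: "w \<in> rY `` {h a}"
    then have "w \<in> Y" using eY by (auto dest: equiv_type)
    then obtain b where "b \<in> X" "w = h b" using img by auto
    with a w compat show "w \<in> h ` (rX `` {a})" by auto
  qed
qed

lemma card_quotient_eq_of_image:
  assumes eX: "equiv X rX" and eY: "equiv Y rY" and img: "h ` X = Y"
    and compat: "\<And>a b. a \<in> X \<Longrightarrow> b \<in> X \<Longrightarrow> (a, b) \<in> rX \<longleftrightarrow> (h a, h b) \<in> rY"
  shows "card (X // rX) = card (Y // rY)"
proof -
  note cls = image_equiv_class[OF eX eY img compat]
  have "bij_betw (\<lambda>C. h ` C) (X // rX) (Y // rY)"
  proof (rule bij_betw_imageI)
    show "inj_on ((`) h) (X // rX)"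
    proof (rule inj_onI)
      fix C D assume C: "C \<in> X // rX" and D: "D \<in> X // rX" and eq: "h ` C = h ` D"
      from C obtain a where a: "a \<in> X" "C = rX `` {a}" by (auto elim: quotientE)
      from D obtain b where b: "b \<in> X" "D = rX `` {b}" by (auto elim: quotientE)
      have "rY `` {h a} = rY `` {h b}" using eq a b cls by simp
      then have "(h a, h b) \<in> rY" using eY a b img by (meson eq_equiv_class image_eqI)
      then have "(a, b) \<in> rX" using compat a b by simp
      then show "C = D" using a b eX by (simp add: equiv_class_eq)
    qed
    show "(`) h ` (X // rX) = Y // rY"
    proof
      show "(`) h ` (X // rX) \<subseteq> Y // rY"
        using cls img by (auto elim!: quotientE intro!: quotientI)
      show "Y // rY \<subseteq> (`) h ` (X // rX)"
      proof
        fix E assume "E \<in> Y // rY"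
        then obtain y where y: "y \<in> Y" "E = rY `` {y}" by (auto elim: quotientE)
        then obtain a where "a \<in> X" "y = h a" using img by auto
        then show "E \<in> (`) h ` (X // rX)" using cls y by (auto intro: quotientI)
      qed
    qed
  qed
  then show ?thesis by (rule bij_betw_same_card)
qed

lemma card_quotient_restrict:
  assumes eX: "equiv X r" and sub: "X' \<subseteq> X"
    and meet: "\<And>u. u \<in> X \<Longrightarrow> \<exists>v\<in>X'. (u, v) \<in> r"
    and e': "equiv X' r'"
    and same: "\<And>a b. a \<in> X' \<Longrightarrow> b \<in> X' \<Longrightarrow> (a, b) \<in> r' \<longleftrightarrow> (a, b) \<in> r"
  shows "card (X' // r') = card (X // r)"
proof -
  define h where "h u = (if u \<in> X' then u else (SOME v. v \<in> X' \<and> (u, v) \<in> r))" for u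
  have h: "h u \<in> X' \<and> (u, h u) \<in> r" if "u \<in> X" for u
  proof (cases "u \<in> X'")
    case True then show ?thesis using eX that by (simp add: h_def equiv_def refl_on_def)
  next
    case False
    from meet[OF that] have "\<exists>v. v \<in> X' \<and> (u, v) \<in> r" by auto
    from someI_ex[OF this] False show ?thesis by (simp add: h_def)
  qed
  have img: "h ` X = X'"
  proof
    show "h ` X \<subseteq> X'" using h by auto
    show "X' \<subseteq> h ` X" using sub by (force simp: h_def)
  qed
  have "card (X // r) = card (X' // r')"
  proof (rule card_quotient_eq_of_image[OF eX e' img])
    fix a b assume a: "a \<in> X" and b: "b \<in> X"
    have "(a, b) \<in> r \<longleftrightarrow> (h a, h b) \<in> r"
      using h[OF a] h[OF b] eX unfolding equiv_def by (meson symD transD)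
    also have "\<dots> \<longleftrightarrow> (h a, h b) \<in> r'" using same h a b by auto
    finally show "(a, b) \<in> r \<longleftrightarrow> (h a, h b) \<in> r'" .
  qed
  then show ?thesis by simp
qed

lemma equiv_Restr: "equiv X r \<Longrightarrow> Z \<subseteq> X \<Longrightarrow> equiv Z (Restr r Z)"
  unfolding equiv_def refl_on_def sym_def trans_def by blast

lemma quotient_Diff_class:
  assumes eX: "equiv X r" and v: "v \<in> X"
  defines "Z \<equiv> X - r `` {v}"
  shows "Z // (Restr r Z) = X // r - {r `` {v}}"
proof -
  have cls: "(Restr r Z) `` {z} = r `` {z}" if z: "z \<in> Z" for z
  proof -
    have "r `` {z} \<subseteq> Z"
    proof
      fix w assume w: "w \<in> r `` {z}"
      then have "w \<in> X" using eX by (auto dest: equiv_type)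
      moreover have "(v, w) \<notin> r"
        using w z eX unfolding Z_def equiv_def sym_def trans_def by blast
      ultimately show "w \<in> Z" by (simp add: Z_def)
    qed
    then show ?thesis using z by auto
  qed
  have "z \<notin> r `` {v} \<longleftrightarrow> r `` {z} \<noteq> r `` {v}" if "z \<in> X" for z
    using that v eX by (metis Image_singleton_iff equiv_class_eq_iff)
  then show ?thesis
    using cls unfolding quotient_def Z_def by auto
qed

lemma card_quotient_merge:
  assumes fin: "finite X" and eX: "equiv X r" and e': "equiv X r'"
    and u0: "u0 \<in> X" and v0: "v0 \<in> X" and nr: "(u0, v0) \<notin> r"
    and char: "\<And>a b. a \<in> X \<Longrightarrow> b \<in> X \<Longrightarrow> (a, b) \<in> r' \<longleftrightarrow>
        (a, b) \<in> r \<or> (((a, u0) \<in> r \<or> (a, v0) \<in> r) \<and> ((b, u0) \<in> r \<or> (b, v0) \<in> r))"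
  shows "card (X // r) = card (X // r') + 1"
proof -
  define Z where "Z = X - r `` {v0}"
  have ZX: "Z \<subseteq> X" by (auto simp: Z_def)
  have u0Z: "u0 \<in> Z" using nr u0 eX unfolding Z_def equiv_def sym_def by blast
  have "card (Z // (Restr r Z)) = card (X // r')"
  proof (rule card_quotient_restrict[OF e' ZX _ equiv_Restr[OF eX ZX]])
    fix u assume u: "u \<in> X"
    show "\<exists>v\<in>Z. (u, v) \<in> r'"
    proof (cases "u \<in> Z")
      case True then show ?thesis using e' u by (auto simp: equiv_def refl_on_def)
    next
      case False
      then have "(u, v0) \<in> r" using u eX by (auto simp: Z_def equiv_def sym_def)
      then have "(u, u0) \<in> r'" using char[OF u u0] eX u0 by (auto simp: equiv_def refl_on_def)
      then show ?thesis using u0Z by blast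
    qed
  next
    fix a b assume a: "a \<in> Z" and b: "b \<in> Z"
    then have "(a, v0) \<notin> r" "(b, v0) \<notin> r" using eX
      by (auto simp: Z_def equiv_def sym_def)
    then have "(a, b) \<in> r' \<longleftrightarrow> (a, b) \<in> r" using char a b ZX eX
      unfolding equiv_def sym_def trans_def by blast
    then show "(a, b) \<in> Restr r Z \<longleftrightarrow> (a, b) \<in> r'" using a b by auto
  qed
  moreover have "Z // (Restr r Z) = X // r - {r `` {v0}}"
    unfolding Z_def by (rule quotient_Diff_class[OF eX v0])
  moreover have "r `` {v0} \<in> X // r" using v0 by (rule quotientI)
  moreover have "finite (X // r)" using fin eX by (simp add: finite_quotient equiv_type)
  ultimately show ?thesis by (metis card_Suc_Diff1 Suc_eq_plus1)
qed

lemma card_filter_split: "finite A \<Longrightarrow> card {x \<in> A. P x} + card {x \<in> A. \<not> P x} = card A"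
  using card_Int_Diff[of A "Collect P"] by (simp add: Int_def set_diff_eq)

section \<open>Graphs generated by fixed-point-free involutions\<close>

definition reach_rel :: "'a set \<Rightarrow> ('a \<Rightarrow> 'a \<Rightarrow> bool) \<Rightarrow> ('a \<times> 'a) set" where
  "reach_rel X E = {(u, v). u \<in> X \<and> v \<in> X \<and> E\<^sup>*\<^sup>* u v}"

definition num_comps :: "'a set \<Rightarrow> ('a \<Rightarrow> 'a \<Rightarrow> bool) \<Rightarrow> nat" where
  "num_comps X E = card (X // reach_rel X E)"

definition fpf_invol :: "'a set \<Rightarrow> ('a \<Rightarrow> 'a) \<Rightarrow> bool" where
  "fpf_invol X f \<longleftrightarrow> (\<forall>x\<in>X. f x \<in> X \<and> f x \<noteq> x \<and> f (f x) = x)"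

definition graph2 :: "'a set \<Rightarrow> ('a \<Rightarrow> 'a) \<Rightarrow> ('a \<Rightarrow> 'a) \<Rightarrow> 'a \<Rightarrow> 'a \<Rightarrow> bool" where
  "graph2 X f g u v \<longleftrightarrow> u \<in> X \<and> v \<in> X \<and> (v = f u \<or> v = g u)"

definition graph3 :: "'a set \<Rightarrow> ('a \<Rightarrow> 'a) \<Rightarrow> ('a \<Rightarrow> 'a) \<Rightarrow> ('a \<Rightarrow> 'a) \<Rightarrow> 'a \<Rightarrow> 'a \<Rightarrow> bool" where
  "graph3 X f g h u v \<longleftrightarrow> u \<in> X \<and> v \<in> X \<and> (v = f u \<or> v = g u \<or> v = h u)"

lemmas rtranclp_symD = sympD[OF symp_rtranclp]

lemma equiv_reach_rel: "symp E \<Longrightarrow> equiv X (reach_rel X E)"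
  unfolding reach_rel_def equiv_def refl_on_def sym_def trans_def
  by (auto intro: rtranclp_symD rtranclp_trans)

lemma symp_graph2: "fpf_invol X f \<Longrightarrow> fpf_invol X g \<Longrightarrow> symp (graph2 X f g)"
  unfolding symp_def graph2_def fpf_invol_def by auto

lemma symp_graph3: "fpf_invol X f \<Longrightarrow> fpf_invol X g \<Longrightarrow> fpf_invol X h \<Longrightarrow> symp (graph3 X f g h)"
  unfolding symp_def graph3_def fpf_invol_def by auto

lemma graph2_commute: "graph2 X f g = graph2 X g f"
  unfolding graph2_def by (intro ext) auto

lemma graph3_commute: "graph3 X f g h = graph3 X g f h" "graph3 X f g h = graph3 X f h g"
  unfolding graph3_def by (intro ext, auto)+

lemma graph2_imp_graph3: "graph2 X f g u v \<Longrightarrow> graph3 X h f g u v"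
  unfolding graph2_def graph3_def by auto

lemma fpf_involD: "fpf_invol X f \<Longrightarrow> x \<in> X \<Longrightarrow> f x \<in> X \<and> f x \<noteq> x \<and> f (f x) = x"
  by (simp add: fpf_invol_def)

lemma fpf_invol_eq: "fpf_invol X f \<Longrightarrow> u \<in> X \<Longrightarrow> v \<in> X \<Longrightarrow> f u = v \<longleftrightarrow> u = f v"
  unfolding fpf_invol_def by metis

lemma even_card_if_fpf_invol: "finite S \<Longrightarrow> fpf_invol S f \<Longrightarrow> even (card S)"
proof (induction "card S" arbitrary: S rule: less_induct)
  case less
  show ?case
  proof (cases "S = {}")
    case False
    then obtain u where u: "u \<in> S" by auto
    note fu = fpf_involD[OF less.prems(2) u]
    let ?T = "S - {u, f u}"
    have "card {u, f u} = 2" "card {u, f u} \<le> card S"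
      using u fu less.prems(1) by (auto intro: card_mono)
    then have cT: "card S = card ?T + 2"
      using u fu less.prems(1) by (simp add: card_Diff_subset)
    have "fpf_invol ?T f"
      unfolding fpf_invol_def
    proof
      fix w assume w: "w \<in> ?T"
      then have fw: "f w \<in> S" "f w \<noteq> w" "f (f w) = w" using fpf_involD[OF less.prems(2)] by auto
      have "f w \<noteq> u" using w fw(3) by auto
      moreover have "f w \<noteq> f u" using w fw(3) fu by (metis Diff_iff insertCI)
      ultimately show "f w \<in> ?T \<and> f w \<noteq> w \<and> f (f w) = w" using fw by simp
    qed
    then have "even (card ?T)" using less cT by simp
    then show ?thesis using cT by simp
  qed simp
qed

text \<open>If \<open>E'\<close> arises from \<open>E\<close> by deleting \<open>x\<close> and \<open>y\<close> and connecting their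
  neighbours with each other, then on the remaining vertices \<open>E'\<close>-connectivity is
  \<open>E\<close>-connectivity with \<open>x\<close> and \<open>y\<close> identified.\<close>

lemma rtranclp_identify_pair:
  assumes symE: "symp E" and symE': "symp E'"
    and old: "\<And>u v. u \<in> X' \<Longrightarrow> v \<in> X' \<Longrightarrow> E u v \<Longrightarrow> E' u v"
    and new: "\<And>u v. E' u v \<Longrightarrow> E u v \<or> ((E x u \<or> E y u) \<and> (E x v \<or> E y v))"
    and near: "\<And>w. w \<in> X' \<Longrightarrow> E x w \<or> E y w \<Longrightarrow> E'\<^sup>*\<^sup>* w z"
    and dom: "\<And>u v. E u v \<Longrightarrow> u \<in> X' \<union> {x, y} \<and> v \<in> X' \<union> {x, y}"
    and u: "u \<in> X'" and v: "v \<in> X'" and xy: "x \<notin> X'" "y \<notin> X'"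
  shows "E'\<^sup>*\<^sup>* u v \<longleftrightarrow> E\<^sup>*\<^sup>* u v \<or> ((E\<^sup>*\<^sup>* u x \<or> E\<^sup>*\<^sup>* u y) \<and> (E\<^sup>*\<^sup>* v x \<or> E\<^sup>*\<^sup>* v y))"
proof
  assume "E'\<^sup>*\<^sup>* u v"
  then show "E\<^sup>*\<^sup>* u v \<or> ((E\<^sup>*\<^sup>* u x \<or> E\<^sup>*\<^sup>* u y) \<and> (E\<^sup>*\<^sup>* v x \<or> E\<^sup>*\<^sup>* v y))"
  proof (induction rule: rtranclp_induct)
    case (step w w')
    have "E\<^sup>*\<^sup>* w w' \<or> ((E\<^sup>*\<^sup>* w x \<or> E\<^sup>*\<^sup>* w y) \<and> (E\<^sup>*\<^sup>* w' x \<or> E\<^sup>*\<^sup>* w' y))"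
      using new[OF step.hyps(2)] symE by (auto dest: sympD)
    with step.IH show ?case by (meson rtranclp_trans rtranclp_symD[OF symE])
  qed simp
next
  have s': "\<And>a b. E'\<^sup>*\<^sup>* a b \<Longrightarrow> E'\<^sup>*\<^sup>* b a" using rtranclp_symD[OF symE'] .
  txt \<open>Along an \<open>E\<close>-path from a point of \<open>X'\<close>, the vertices in \<open>X'\<close> stay \<open>E'\<close>-reachable
    and the vertices \<open>x\<close>, \<open>y\<close> are replaced by \<open>z\<close>.\<close>
  have L: "(w \<in> X' \<longrightarrow> E'\<^sup>*\<^sup>* a w) \<and> (w \<in> {x, y} \<longrightarrow> E'\<^sup>*\<^sup>* a z)"
    if "E\<^sup>*\<^sup>* a w" "a \<in> X'" for a w
    using that(1)
  proof (induction rule: rtranclp_induct)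
    case base then show ?case using that(2) xy by auto
  next
    case (step w w')
    have ww: "E w' w" using step.hyps(2) symE by (simp add: symp_def)
    consider "w \<in> X'" "w' \<in> X'" | "w \<in> X'" "w' \<in> {x, y}" | "w \<in> {x, y}" "w' \<in> X'" | "w \<in> {x, y}" "w' \<in> {x, y}"
      using dom[OF step.hyps(2)] by auto
    then show ?case
    proof cases
      case 1
      then show ?thesis using step old xy by (auto intro: rtranclp.rtrancl_into_rtrancl)
    next
      case 2
      then have "E'\<^sup>*\<^sup>* w z" using near ww by blast
      then show ?thesis using 2 step xy by (auto intro: rtranclp_trans)
    next
      case 3
      then have "E'\<^sup>*\<^sup>* z w'" using near step.hyps(2) s' by blast
      then show ?thesis using 3 step xy by (auto intro: rtranclp_trans)
    next
      case 4
      then show ?thesis using step xy by auto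
    qed
  qed
  assume "E\<^sup>*\<^sup>* u v \<or> ((E\<^sup>*\<^sup>* u x \<or> E\<^sup>*\<^sup>* u y) \<and> (E\<^sup>*\<^sup>* v x \<or> E\<^sup>*\<^sup>* v y))"
  then show "E'\<^sup>*\<^sup>* u v"
  proof
    assume "E\<^sup>*\<^sup>* u v" then show ?thesis using L u v by blast
  next
    assume "(E\<^sup>*\<^sup>* u x \<or> E\<^sup>*\<^sup>* u y) \<and> (E\<^sup>*\<^sup>* v x \<or> E\<^sup>*\<^sup>* v y)"
    then have "E'\<^sup>*\<^sup>* u z" "E'\<^sup>*\<^sup>* z v" using L u v s' by blast+
    then show ?thesis by (rule rtranclp_trans)
  qed
qed

lemma num_comps_restrict:
  assumes symE: "symp E" and symE': "symp E'" and XX: "X' \<subseteq> X"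
    and char: "\<And>u v. u \<in> X' \<Longrightarrow> v \<in> X' \<Longrightarrow> E'\<^sup>*\<^sup>* u v \<longleftrightarrow> E\<^sup>*\<^sup>* u v"
    and meet: "\<And>u. u \<in> X \<Longrightarrow> \<exists>v\<in>X'. E\<^sup>*\<^sup>* u v"
  shows "num_comps X' E' = num_comps X E"
  unfolding num_comps_def
proof (rule card_quotient_restrict[OF equiv_reach_rel[OF symE] XX _ equiv_reach_rel[OF symE']])
  fix u assume "u \<in> X" then show "\<exists>v\<in>X'. (u, v) \<in> reach_rel X E"
    using meet XX by (force simp: reach_rel_def)
next
  fix a b assume "a \<in> X'" "b \<in> X'" then show "(a, b) \<in> reach_rel X' E' \<longleftrightarrow> (a, b) \<in> reach_rel X E"
    using char XX by (auto simp: reach_rel_def)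
qed

lemma num_comps_identify:
  assumes fin: "finite X" and symE: "symp E" and symE': "symp E'" and XX: "X' \<subseteq> X"
    and x: "x \<in> X" and y: "y \<in> X" and nxy: "\<not> E\<^sup>*\<^sup>* x y"
    and char: "\<And>u v. u \<in> X' \<Longrightarrow> v \<in> X' \<Longrightarrow> E'\<^sup>*\<^sup>* u v \<longleftrightarrow>
        E\<^sup>*\<^sup>* u v \<or> ((E\<^sup>*\<^sup>* u x \<or> E\<^sup>*\<^sup>* u y) \<and> (E\<^sup>*\<^sup>* v x \<or> E\<^sup>*\<^sup>* v y))"
    and meet: "\<And>u. u \<in> X \<Longrightarrow> \<exists>v\<in>X'. E\<^sup>*\<^sup>* u v"
  shows "num_comps X E = num_comps X' E' + 1"
proof -
  have s: "\<And>a b. E\<^sup>*\<^sup>* a b \<Longrightarrow> E\<^sup>*\<^sup>* b a" using rtranclp_symD[OF symE] .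
  define R where "R = {(a, b). a \<in> X \<and> b \<in> X \<and>
        (E\<^sup>*\<^sup>* a b \<or> ((E\<^sup>*\<^sup>* a x \<or> E\<^sup>*\<^sup>* a y) \<and> (E\<^sup>*\<^sup>* b x \<or> E\<^sup>*\<^sup>* b y)))}"
  have eR: "equiv X R"
    unfolding equiv_def refl_on_def sym_def trans_def R_def
    using s rtranclp_trans[of E] by blast
  have "card (X // reach_rel X E) = card (X // R) + 1"
  proof (rule card_quotient_merge[OF fin equiv_reach_rel[OF symE] eR x y])
    show "(x, y) \<notin> reach_rel X E" using nxy by (simp add: reach_rel_def)
  qed (use x y in \<open>auto simp: R_def reach_rel_def\<close>)
  moreover have "card (X' // reach_rel X' E') = card (X // R)"
  proof (rule card_quotient_restrict[OF eR XX _ equiv_reach_rel[OF symE']])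
    fix u assume "u \<in> X" then show "\<exists>v\<in>X'. (u, v) \<in> R" using meet XX by (force simp: R_def)
  qed (use char XX in \<open>auto simp: reach_rel_def R_def\<close>)
  ultimately show ?thesis by (simp add: num_comps_def)
qed

abbreviation rewire :: "('a \<Rightarrow> 'a) \<Rightarrow> 'a \<Rightarrow> 'a \<Rightarrow> 'a \<Rightarrow> 'a" where
  "rewire f x y \<equiv> f(f x := f y, f y := f x)"

lemma rewire_apply:
  assumes "fpf_invol X f" "x \<in> X" "y \<in> X" "u \<in> X" "f u \<noteq> x" "f u \<noteq> y"
  shows "rewire f x y u = f u"
  using assms fpf_invol_eq[of X f u] by auto

lemma rewire_cases:
  "rewire f x y u = f u \<or> (u \<in> {f x, f y} \<and> rewire f x y u \<in> {f x, f y})"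
  by auto

lemma fpf_invol_rewire:
  assumes f: "fpf_invol X f" and x: "x \<in> X" and y: "y \<in> X" and xy: "x \<noteq> y" and fxy: "f x \<noteq> y"
  shows "fpf_invol (X - {x, y}) (rewire f x y)"
  unfolding fpf_invol_def
proof
  note fx = fpf_involD[OF f x] and fy = fpf_involD[OF f y]
  have fyx: "f y \<noteq> x" using fy fxy by auto
  have ne: "f x \<noteq> f y" using fx fy xy by metis
  fix u assume u: "u \<in> X - {x, y}"
  show "rewire f x y u \<in> X - {x, y} \<and> rewire f x y u \<noteq> u \<and> rewire f x y (rewire f x y u) = u"
  proof (cases "u = f x \<or> u = f y")
    case True then show ?thesis using fx fy fyx fxy ne u by auto
  next
    case False
    then have "f u \<noteq> x" "f u \<noteq> y" "f u \<noteq> f x" "f u \<noteq> f y"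
      using u fpf_invol_eq[OF f, of u] x y fpf_involD[OF f] by auto
    then show ?thesis using False u fpf_involD[OF f, of u] by auto
  qed
qed

lemma fpf_invol_Diff_pair:
  assumes a: "fpf_invol X a" and x: "x \<in> X"
  shows "fpf_invol (X - {x, a x}) a"
  using fpf_involD[OF a x] fpf_invol_eq[OF a] a unfolding fpf_invol_def by auto

text \<open>A parity argument: the part of the new component of \<open>b x\<close> that lies in the old component
  of \<open>x\<close> is closed under \<open>c\<close>, and together with \<open>x\<close> under \<open>b\<close>, unless it contains \<open>c x\<close>; it cannot
  have even cardinality both with and without \<open>x\<close>.\<close>

lemma rewire_connects_partners:
  assumes fin: "finite X" and b: "fpf_invol X b" and c: "fpf_invol X c"
    and x: "x \<in> X" and y: "y \<in> X" and nxy: "\<not> (graph2 X b c)\<^sup>*\<^sup>* x y"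
  shows "(graph2 (X - {x, y}) (rewire b x y) (rewire c x y))\<^sup>*\<^sup>* (b x) (c x)"
proof (rule ccontr)
  define X' where "X' = X - {x, y}"
  let ?F = "graph2 X b c" and ?F' = "graph2 X' (rewire b x y) (rewire c x y)"
  assume "\<not> (graph2 (X - {x, y}) (rewire b x y) (rewire c x y))\<^sup>*\<^sup>* (b x) (c x)"
  then have not_cx: "\<not> ?F'\<^sup>*\<^sup>* (b x) (c x)" by (simp add: X'_def)
  note bx = fpf_involD[OF b x] and cx = fpf_involD[OF c x]
  have Fy: "?F\<^sup>*\<^sup>* (b y) y" "?F\<^sup>*\<^sup>* (c y) y"
    using y fpf_involD[OF b y] fpf_involD[OF c y] by (auto simp: graph2_def)
  have Fx: "?F\<^sup>*\<^sup>* x (b x)" using x bx by (auto simp: graph2_def)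
  have noty: "\<not> ?F\<^sup>*\<^sup>* x u" if "?F\<^sup>*\<^sup>* u y" for u
    using that nxy rtranclp_trans by metis
  define K where "K = {w \<in> X'. ?F'\<^sup>*\<^sup>* (b x) w \<and> ?F\<^sup>*\<^sup>* x w}"
  have finK: "finite K" using fin by (auto simp: K_def X'_def)
  have xK: "x \<notin> K" by (auto simp: K_def X'_def)
  have step: "f u \<in> K" if f: "fpf_invol X f" and f_graph: "\<And>v. v \<in> X \<Longrightarrow> ?F v (f v)"
    and rw: "\<And>v. v \<in> X' \<Longrightarrow> f v \<in> X' \<Longrightarrow> ?F' v (f v)"
    and u: "u \<in> K" and fux: "f u \<noteq> x" and fuy: "u \<noteq> f y" for f u
  proof -
    have uX': "u \<in> X'" and r1: "?F'\<^sup>*\<^sup>* (b x) u" and r2: "?F\<^sup>*\<^sup>* x u" using u by (auto simp: K_def)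
    have uX: "u \<in> X" using uX' by (simp add: X'_def)
    have "f u \<noteq> y" using fuy fpf_invol_eq[OF f uX y] by auto
    then have fuX': "f u \<in> X'" using fux fpf_involD[OF f uX] by (simp add: X'_def)
    have "?F'\<^sup>*\<^sup>* (b x) (f u)" using r1 rw[OF uX' fuX'] by auto
    moreover have "?F\<^sup>*\<^sup>* x (f u)" using r2 f_graph[OF uX] by auto
    ultimately show ?thesis using fuX' by (simp add: K_def)
  qed
  have "even (card K)"
  proof (rule even_card_if_fpf_invol[OF finK])
    show "fpf_invol K c" unfolding fpf_invol_def
    proof
      fix u assume u: "u \<in> K"
      then have uX: "u \<in> X" "u \<noteq> c x" "u \<noteq> c y"
        using not_cx noty Fy by (auto simp: K_def X'_def)
      have "c u \<noteq> x" using uX fpf_invol_eq[OF c uX(1) x] by auto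
      moreover have "c u \<in> K"
      proof (rule step[OF c _ _ u])
        show "?F' v (c v)" if "v \<in> X'" "c v \<in> X'" for v
          using that rewire_apply[OF c x y, of v] by (simp add: graph2_def X'_def)
      qed (use calculation uX fpf_involD[OF c] in \<open>auto simp: graph2_def\<close>)
      ultimately show "c u \<in> K \<and> c u \<noteq> u \<and> c (c u) = u" using fpf_involD[OF c uX(1)] by simp
    qed
  qed
  moreover have "even (card (insert x K))"
  proof (rule even_card_if_fpf_invol)
    show "fpf_invol (insert x K) b" unfolding fpf_invol_def
    proof
      fix u assume u: "u \<in> insert x K"
      show "b u \<in> insert x K \<and> b u \<noteq> u \<and> b (b u) = u"
      proof (cases "u = x \<or> b u = x")
        case True
        have "b x \<noteq> y" using Fx nxy by auto
        then have "b x \<in> K" using Fx bx by (simp add: K_def X'_def)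
        then show ?thesis using True u bx fpf_involD[OF b] by (auto simp: K_def X'_def)
      next
        case False
        then have uK: "u \<in> K" using u by simp
        then have uX: "u \<in> X" "u \<noteq> b y" using noty Fy by (auto simp: K_def X'_def)
        have "b u \<in> K"
        proof (rule step[OF b _ _ uK])
          show "?F' v (b v)" if "v \<in> X'" "b v \<in> X'" for v
            using that rewire_apply[OF b x y, of v] by (simp add: graph2_def X'_def)
        qed (use False uX fpf_involD[OF b] in \<open>auto simp: graph2_def\<close>)
        then show ?thesis using fpf_involD[OF b uX(1)] by simp
      qed
    qed
  qed (use finK in simp)
  ultimately show False using finK xK by simp
qed

text \<open>The edges \<open>A\<close> are kept as they are; they may join \<open>x\<close> and \<open>y\<close> only to each other.\<close>

lemma num_comps_rewire:
  assumes fin: "finite X" and b: "fpf_invol X b" and c: "fpf_invol X c"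
    and x: "x \<in> X" and y: "y \<in> X" and xy: "x \<noteq> y" and nxy: "\<not> (graph2 X b c)\<^sup>*\<^sup>* x y"
    and symA: "symp A" and A_dom: "\<And>u v. A u v \<Longrightarrow> u \<in> X \<and> v \<in> X"
    and A_pair: "\<And>u v. A u v \<Longrightarrow> u \<in> {x, y} \<Longrightarrow> v \<in> {x, y}"
  defines "E \<equiv> \<lambda>u v. A u v \<or> graph2 X b c u v"
    and "E' \<equiv> \<lambda>u v. A u v \<and> u \<notin> {x, y} \<or> graph2 (X - {x, y}) (rewire b x y) (rewire c x y) u v"
  shows "num_comps X E = num_comps (X - {x, y}) E' + (if E\<^sup>*\<^sup>* x y then 0 else 1)"
proof -
  define X' where "X' = X - {x, y}"
  let ?G = "graph2 X b c" and ?G' = "graph2 X' (rewire b x y) (rewire c x y)"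
  note bx = fpf_involD[OF b x] and cx = fpf_involD[OF c x]
    and by' = fpf_involD[OF b y] and cy = fpf_involD[OF c y]
  have G_edges: "?G x (b x)" "?G x (c x)" "?G y (b y)" "?G y (c y)"
    using x y bx cx by' cy by (auto simp: graph2_def)
  have bxy: "b x \<noteq> y" "c x \<noteq> y" using G_edges nxy by auto
  then have byx: "b y \<noteq> x" "c y \<noteq> x" using fpf_invol_eq[OF b y x] fpf_invol_eq[OF c y x] by auto
  have mem: "b x \<in> X'" "c x \<in> X'" "b y \<in> X'" "c y \<in> X'" using bx cx by' cy bxy byx
    by (auto simp: X'_def)
  have A_X': "v \<in> X'" if "A u v" "u \<in> X'" for u v
    using that A_dom A_pair[of v u] symA by (auto simp: X'_def dest: sympD)
  have sE: "symp E"
    using symA symp_graph2[OF b c] unfolding E_def symp_def by blast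
  have E'_eq: "E' = (\<lambda>u v. A u v \<and> u \<in> X' \<or> ?G' u v)"
    using A_dom unfolding E'_def X'_def by (intro ext) blast
  have sG': "symp ?G'"
    unfolding X'_def
      by (rule symp_graph2[OF fpf_invol_rewire[OF b x y xy bxy(1)] fpf_invol_rewire[OF c x y xy bxy(2)]])
  have sE': "symp E'"
    unfolding E'_eq symp_def using A_X' sympD[OF symA] sympD[OF sG'] by blast
  have par: "?G'\<^sup>*\<^sup>* (b x) (c x)"
    using rewire_connects_partners[OF fin b c x y nxy] by (simp add: X'_def)
  have char: "E'\<^sup>*\<^sup>* u v \<longleftrightarrow> E\<^sup>*\<^sup>* u v \<or> ((E\<^sup>*\<^sup>* u x \<or> E\<^sup>*\<^sup>* u y) \<and> (E\<^sup>*\<^sup>* v x \<or> E\<^sup>*\<^sup>* v y))"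
    if u: "u \<in> X'" and v: "v \<in> X'" for u v
  proof (rule rtranclp_identify_pair[OF sE sE', where z = "b x"])
    fix u v assume "u \<in> X'" "v \<in> X'" "E u v"
    then show "E' u v"
      using rewire_apply[OF b x y, of u] rewire_apply[OF c x y, of u]
      unfolding E_def E'_eq by (auto simp: graph2_def X'_def)
  next
    fix u v assume "E' u v"
    then show "E u v \<or> ((E x u \<or> E y u) \<and> (E x v \<or> E y v))"
      using rewire_cases[of b x y u] rewire_cases[of c x y u] G_edges A_dom
      unfolding E_def E'_eq by (auto simp: graph2_def X'_def)
  next
    fix w assume w: "w \<in> X'" "E x w \<or> E y w"
    then have "w \<in> {b x, c x, b y, c y}"
      using A_pair[of x w] A_pair[of y w] unfolding E_def by (auto simp: graph2_def X'_def)
    moreover have "?G' (b y) (b x)" "?G' (c y) (c x)" using mem by (auto simp: graph2_def)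
    ultimately have "?G'\<^sup>*\<^sup>* w (b x)"
      using par rtranclp_symD[OF sG'] by (auto intro: converse_rtranclp_into_rtranclp)
    then show "E'\<^sup>*\<^sup>* w (b x)"
      unfolding E'_eq by (rule rtranclp_mono[THEN predicate2D, rotated]) auto
  qed (use u v A_dom in \<open>auto simp: E_def X'_def graph2_def\<close>)
  have meet: "\<exists>v\<in>X'. E\<^sup>*\<^sup>* u v" if "u \<in> X" for u
  proof (cases "u \<in> X'")
    case False
    then have "u = x \<or> u = y" using that by (auto simp: X'_def)
    then show ?thesis using mem G_edges unfolding E_def by (metis r_into_rtranclp)
  qed auto
  have X'X: "X' \<subseteq> X" by (auto simp: X'_def)
  show ?thesis
  proof (cases "E\<^sup>*\<^sup>* x y")
    case True
    have "E\<^sup>*\<^sup>* u v" if "(E\<^sup>*\<^sup>* u x \<or> E\<^sup>*\<^sup>* u y) \<and> (E\<^sup>*\<^sup>* v x \<or> E\<^sup>*\<^sup>* v y)" for u v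
      using that True rtranclp_symD[OF sE] rtranclp_trans[of E] by metis
    then have "num_comps X' E' = num_comps X E"
      using num_comps_restrict[OF sE sE' X'X _ meet] char by blast
    then show ?thesis using True by (simp add: X'_def)
  next
    case False
    show ?thesis using num_comps_identify[OF fin sE sE' X'X x y False char meet] False
      by (simp add: X'_def)
  qed
qed

corollary num_comps_rewire_disconnected:
  assumes "finite X" "fpf_invol X b" "fpf_invol X c" "x \<in> X" "y \<in> X" "x \<noteq> y"
    and nxy: "\<not> (graph2 X b c)\<^sup>*\<^sup>* x y"
  shows "num_comps X (graph2 X b c)
    = num_comps (X - {x, y}) (graph2 (X - {x, y}) (rewire b x y) (rewire c x y)) + 1"
  using num_comps_rewire[OF assms, of "\<lambda>_ _. False"] nxy by (simp add: symp_def)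

corollary num_comps_rewire_graph3:
  assumes fin: "finite X" and a: "fpf_invol X a" and b: "fpf_invol X b" and c: "fpf_invol X c"
    and x: "x \<in> X" and nxy: "\<not> (graph2 X b c)\<^sup>*\<^sup>* x (a x)"
  shows "num_comps (X - {x, a x}) (graph3 (X - {x, a x}) a (rewire b x (a x)) (rewire c x (a x)))
    = num_comps X (graph3 X a b c)"
proof -
  note ax = fpf_involD[OF a x]
  let ?A = "graph2 X a a"
  have A_pair: "v \<in> {x, a x}" if "?A u v" "u \<in> {x, a x}" for u v
    using that ax by (auto simp: graph2_def)
  have "graph3 X a b c = (\<lambda>u v. ?A u v \<or> graph2 X b c u v)"
    by (intro ext) (auto simp: graph2_def graph3_def)
  moreover have "graph3 (X - {x, a x}) a (rewire b x (a x)) (rewire c x (a x))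
    = (\<lambda>u v. ?A u v \<and> u \<notin> {x, a x}
        \<or> graph2 (X - {x, a x}) (rewire b x (a x)) (rewire c x (a x)) u v)"
    using fpf_involD[OF fpf_invol_Diff_pair[OF a x]] by (intro ext) (auto simp: graph2_def graph3_def)
  moreover have "(\<lambda>u v. ?A u v \<or> graph2 X b c u v)\<^sup>*\<^sup>* x (a x)"
    using x ax by (auto simp: graph2_def)
  moreover have "num_comps X (\<lambda>u v. ?A u v \<or> graph2 X b c u v)
    = num_comps (X - {x, a x}) (\<lambda>u v. ?A u v \<and> u \<notin> {x, a x}
        \<or> graph2 (X - {x, a x}) (rewire b x (a x)) (rewire c x (a x)) u v)
      + (if (\<lambda>u v. ?A u v \<or> graph2 X b c u v)\<^sup>*\<^sup>* x (a x) then 0 else 1)"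
    by (rule num_comps_rewire[OF fin b c x _ _ nxy symp_graph2[OF a a] _ A_pair])
      (use ax in \<open>auto simp: graph2_def\<close>)
  ultimately show ?thesis by simp
qed

lemma graph2_self_reach:
  assumes b: "fpf_invol X b" and x: "x \<in> X" and "(graph2 X b b)\<^sup>*\<^sup>* x w"
  shows "w = x \<or> w = b x"
  using assms(3) by induction (use fpf_involD[OF b x] in \<open>auto simp: graph2_def\<close>)

lemma graph3_same: "graph3 X f g g = graph2 X f g"
  by (intro ext) (auto simp: graph2_def graph3_def)

corollary num_comps_rewire_graph2:
  assumes fin: "finite X" and a: "fpf_invol X a" and b: "fpf_invol X b"
    and x: "x \<in> X" and bx: "b x \<noteq> a x"
  shows "num_comps (X - {x, a x}) (graph2 (X - {x, a x}) a (rewire b x (a x))) = num_comps X (graph2 X a b)"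
proof -
  have "\<not> (graph2 X b b)\<^sup>*\<^sup>* x (a x)"
    using graph2_self_reach[OF b x, of "a x"] bx fpf_involD[OF a x] by auto
  then show ?thesis using num_comps_rewire_graph3[OF fin a b b x, unfolded graph3_same] by blast
qed

lemma euler_reduce_step:
  assumes fin: "finite X" and a: "fpf_invol X a" and b: "fpf_invol X b" and c: "fpf_invol X c"
    and x: "x \<in> X" and nxy: "\<not> (graph2 X b c)\<^sup>*\<^sup>* x (a x)"
  shows "\<exists>X' b' c'. finite X' \<and> card X = card X' + 2
    \<and> fpf_invol X' a \<and> fpf_invol X' b' \<and> fpf_invol X' c'
    \<and> num_comps X' (graph2 X' a b') = num_comps X (graph2 X a b)
    \<and> num_comps X' (graph2 X' a c') = num_comps X (graph2 X a c)
    \<and> num_comps X (graph2 X b c) = num_comps X' (graph2 X' b' c') + 1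
    \<and> num_comps X' (graph3 X' a b' c') = num_comps X (graph3 X a b c)"
proof (intro exI conjI)
  have ax: "a x \<in> X" "a x \<noteq> x" using fpf_involD[OF a x] by auto
  have "graph2 X b c x (b x)" "graph2 X b c x (c x)"
    using x fpf_involD[OF b x] fpf_involD[OF c x] by (auto simp: graph2_def)
  then have bx: "b x \<noteq> a x" and cx: "c x \<noteq> a x" using nxy by auto
  show "finite (X - {x, a x})" using fin by simp
  show "card X = card (X - {x, a x}) + 2"
    using fin x ax card_mono[OF fin, of "{x, a x}"] by (simp add: card_Diff_subset)
  show "fpf_invol (X - {x, a x}) a" by (rule fpf_invol_Diff_pair[OF a x])
  show "fpf_invol (X - {x, a x}) (rewire b x (a x))"
    by (rule fpf_invol_rewire[OF b x]) (use ax bx in auto)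
  show "fpf_invol (X - {x, a x}) (rewire c x (a x))"
    by (rule fpf_invol_rewire[OF c x]) (use ax cx in auto)
  show "num_comps (X - {x, a x}) (graph2 (X - {x, a x}) a (rewire b x (a x))) = num_comps X (graph2 X a b)"
    by (rule num_comps_rewire_graph2[OF fin a b x bx])
  show "num_comps (X - {x, a x}) (graph2 (X - {x, a x}) a (rewire c x (a x))) = num_comps X (graph2 X a c)"
    by (rule num_comps_rewire_graph2[OF fin a c x cx])
  show "num_comps X (graph2 X b c)
    = num_comps (X - {x, a x}) (graph2 (X - {x, a x}) (rewire b x (a x)) (rewire c x (a x))) + 1"
    by (rule num_comps_rewire_disconnected[OF fin b c x _ _ nxy]) (use ax in auto)
  show "num_comps (X - {x, a x}) (graph3 (X - {x, a x}) a (rewire b x (a x)) (rewire c x (a x)))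
    = num_comps X (graph3 X a b c)"
    by (rule num_comps_rewire_graph3[OF fin a b c x nxy])
qed

lemma two_mul_num_comps_le_card:
  assumes fin: "finite X" and a: "fpf_invol X a" and sE: "symp E" and Ea: "\<And>x. x \<in> X \<Longrightarrow> E x (a x)"
  shows "2 * num_comps X E \<le> card X"
proof -
  let ?r = "reach_rel X E"
  have eq: "equiv X ?r" by (rule equiv_reach_rel[OF sE])
  have fin_cls: "finite C" if "C \<in> X // ?r" for C
    using that fin in_quotient_imp_subset[OF eq] finite_subset by blast
  have "card X = sum card (X // ?r)"
    using card_Union_disjoint[of "X // ?r"] Union_quotient[OF eq] quotient_disj[OF eq] fin_cls
    unfolding pairwise_def disjnt_def by metis
  also have "\<dots> \<ge> sum (\<lambda>_. 2) (X // ?r)"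
  proof (rule sum_mono)
    fix C assume C: "C \<in> X // ?r"
    then obtain u where u: "u \<in> X" "C = ?r `` {u}" by (auto elim: quotientE)
    have au: "a u \<in> X" "a u \<noteq> u" using fpf_involD[OF a u(1)] by auto
    have "{u, a u} \<subseteq> C" using u au Ea[OF u(1)] by (auto simp: reach_rel_def)
    then have "card {u, a u} \<le> card C" using fin_cls[OF C] by (rule card_mono[rotated])
    then show "2 \<le> card C" using au by simp
  qed
  finally show ?thesis by (simp add: num_comps_def mult.commute)
qed

lemma reach_rel_graph3_eq_graph2:
  assumes "\<And>x. x \<in> X \<Longrightarrow> (graph2 X f g)\<^sup>*\<^sup>* x (h x)"
  shows "reach_rel X (graph3 X h f g) = reach_rel X (graph2 X f g)"
proof -
  have "(graph2 X f g)\<^sup>*\<^sup>* u v" if "(graph3 X h f g)\<^sup>*\<^sup>* u v" for u v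
    using that
  proof induction
    case (step v w)
    then have "w = h v \<or> graph2 X f g v w" and "v \<in> X" by (auto simp: graph3_def graph2_def)
    then have "(graph2 X f g)\<^sup>*\<^sup>* v w" using assms by auto
    then show ?case using step.IH by (rule rtranclp_trans[rotated])
  qed simp
  moreover have "(graph3 X h f g)\<^sup>*\<^sup>* u v" if "(graph2 X f g)\<^sup>*\<^sup>* u v" for u v
    using that by (rule rtranclp_mono[THEN predicate2D, rotated]) (auto intro: graph2_imp_graph3)
  ultimately show ?thesis unfolding reach_rel_def by blast
qed

text \<open>Regard \<open>X\<close> as the vertices of a cubic graph whose edges are coloured by \<open>a\<close>, \<open>b\<close>
  and \<open>c\<close>; gluing discs along its two-coloured cycles gives a closed surface, and the inequality
  says that each component has Euler characteristic at most 2. Removing an \<open>a\<close>-edge whose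
  endpoints lie on different \<open>bc\<close>-cycles preserves both sides; if there is none, the three
  two-coloured graphs have the components of the three-coloured one, each of size at least 2.\<close>

theorem euler_ineq_fpf_invol:
  assumes "finite X" "fpf_invol X a" "fpf_invol X b" "fpf_invol X c"
  shows "2 * (num_comps X (graph2 X a b) + num_comps X (graph2 X a c) + num_comps X (graph2 X b c))
    \<le> card X + 4 * num_comps X (graph3 X a b c)"
  using assms
proof (induction "card X" arbitrary: X a b c rule: less_induct)
  case less
  note fin = less.prems(1)
  have reduce: "2 * (num_comps X (graph2 X a b) + num_comps X (graph2 X a c) + num_comps X (graph2 X b c))
    \<le> card X + 4 * num_comps X (graph3 X a b c)"
    if a: "fpf_invol X a" and b: "fpf_invol X b" and c: "fpf_invol X c"
      and x: "x \<in> X" and nxy: "\<not> (graph2 X b c)\<^sup>*\<^sup>* x (a x)" for a b c x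
  proof -
    obtain X' b' c' where r: "finite X'" "card X = card X' + 2"
      "fpf_invol X' a" "fpf_invol X' b'" "fpf_invol X' c'"
      "num_comps X' (graph2 X' a b') = num_comps X (graph2 X a b)"
      "num_comps X' (graph2 X' a c') = num_comps X (graph2 X a c)"
      "num_comps X (graph2 X b c) = num_comps X' (graph2 X' b' c') + 1"
      "num_comps X' (graph3 X' a b' c') = num_comps X (graph3 X a b c)"
      using euler_reduce_step[OF fin a b c x nxy] by blast
    then show ?thesis using less.hyps[of X' a b' c'] by simp
  qed
  show ?case
  proof (cases "\<exists>x\<in>X. \<not> (graph2 X b c)\<^sup>*\<^sup>* x (a x)")
    case True then show ?thesis using reduce less.prems by blast
  next
    case closed_a: False
    show ?thesis
    proof (cases "\<exists>x\<in>X. \<not> (graph2 X a c)\<^sup>*\<^sup>* x (b x)")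
      case True then show ?thesis using reduce[of b a c] less.prems
        by (auto simp: graph2_commute[of X b a] graph3_commute(1)[of X b a c] add_ac)
    next
      case closed_b: False
      show ?thesis
      proof (cases "\<exists>x\<in>X. \<not> (graph2 X a b)\<^sup>*\<^sup>* x (c x)")
        case True
        have "graph3 X c a b = graph3 X a b c" using graph3_commute[of X] by metis
        then show ?thesis using True reduce[of c a b] less.prems
          by (auto simp: graph2_commute[of X c a] graph2_commute[of X c b] add_ac)
      next
        case closed_c: False
        have "num_comps X (graph2 X b c) = num_comps X (graph3 X a b c)"
          "num_comps X (graph2 X a c) = num_comps X (graph3 X a b c)"
          "num_comps X (graph2 X a b) = num_comps X (graph3 X a b c)"
          unfolding num_comps_def
          using reach_rel_graph3_eq_graph2[of X b c a] reach_rel_graph3_eq_graph2[of X a c b]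
            reach_rel_graph3_eq_graph2[of X a b c] closed_a closed_b closed_c graph3_commute[of X]
          by metis+
        moreover have "2 * num_comps X (graph3 X a b c) \<le> card X"
          using less.prems fpf_involD[of X a]
          by (intro two_mul_num_comps_le_card[OF fin _ symp_graph3]) (auto simp: graph3_def)
        ultimately show ?thesis by simp
      qed
    qed
  qed
qed

definition add_edges :: "('a \<Rightarrow> 'a \<Rightarrow> bool) \<Rightarrow> ('a \<times> 'a) set \<Rightarrow> 'a \<Rightarrow> 'a \<Rightarrow> bool" where
  "add_edges E F p q \<longleftrightarrow> E p q \<or> (p, q) \<in> F \<or> (q, p) \<in> F"

lemma symp_add_edges: "symp E \<Longrightarrow> symp (add_edges E F)"
  unfolding symp_def add_edges_def by blast

lemma rtranclp_add_edge_iff: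
  assumes sE: "symp E"
  shows "(add_edges E {(u, v)})\<^sup>*\<^sup>* p q \<longleftrightarrow> E\<^sup>*\<^sup>* p q \<or> ((E\<^sup>*\<^sup>* p u \<or> E\<^sup>*\<^sup>* p v) \<and> (E\<^sup>*\<^sup>* q u \<or> E\<^sup>*\<^sup>* q v))"
proof
  have s: "\<And>a b. E\<^sup>*\<^sup>* a b \<Longrightarrow> E\<^sup>*\<^sup>* b a" using rtranclp_symD[OF sE] .
  assume "(add_edges E {(u, v)})\<^sup>*\<^sup>* p q"
  then show "E\<^sup>*\<^sup>* p q \<or> ((E\<^sup>*\<^sup>* p u \<or> E\<^sup>*\<^sup>* p v) \<and> (E\<^sup>*\<^sup>* q u \<or> E\<^sup>*\<^sup>* q v))"
  proof induction
    case (step w w')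
    then have "E\<^sup>*\<^sup>* w w' \<or> ((E\<^sup>*\<^sup>* w u \<or> E\<^sup>*\<^sup>* w v) \<and> (E\<^sup>*\<^sup>* w' u \<or> E\<^sup>*\<^sup>* w' v))"
      by (auto simp: add_edges_def)
    with step.IH show ?case using s rtranclp_trans[of E] by blast
  qed simp
next
  let ?A = "add_edges E {(u, v)}"
  have mono: "?A\<^sup>*\<^sup>* a b" if "E\<^sup>*\<^sup>* a b" for a b
    using that by (rule rtranclp_mono[THEN predicate2D, rotated]) (auto simp: add_edges_def)
  have uv: "?A\<^sup>*\<^sup>* u v" "?A\<^sup>*\<^sup>* v u" by (auto simp: add_edges_def)
  have s: "?A\<^sup>*\<^sup>* b a" if "?A\<^sup>*\<^sup>* a b" for a b
    using rtranclp_symD[OF symp_add_edges[OF sE] that] .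
  assume "E\<^sup>*\<^sup>* p q \<or> ((E\<^sup>*\<^sup>* p u \<or> E\<^sup>*\<^sup>* p v) \<and> (E\<^sup>*\<^sup>* q u \<or> E\<^sup>*\<^sup>* q v))"
  then show "?A\<^sup>*\<^sup>* p q"
  proof
    assume "(E\<^sup>*\<^sup>* p u \<or> E\<^sup>*\<^sup>* p v) \<and> (E\<^sup>*\<^sup>* q u \<or> E\<^sup>*\<^sup>* q v)"
    then have "?A\<^sup>*\<^sup>* p u" "?A\<^sup>*\<^sup>* u q"
      using mono uv s rtranclp_trans[of ?A] by blast+
    then show ?thesis by (rule rtranclp_trans)
  qed (rule mono)
qed

lemma num_comps_add_edge:
  assumes fin: "finite X" and sE: "symp E" and u: "u \<in> X" and v: "v \<in> X"
  shows "num_comps X E \<le> num_comps X (add_edges E {(u, v)}) + 1"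
proof (cases "E\<^sup>*\<^sup>* u v")
  case True
  have "reach_rel X (add_edges E {(u, v)}) = reach_rel X E"
  proof -
    have "E\<^sup>*\<^sup>* p q" if "(E\<^sup>*\<^sup>* p u \<or> E\<^sup>*\<^sup>* p v) \<and> (E\<^sup>*\<^sup>* q u \<or> E\<^sup>*\<^sup>* q v)" for p q
      using that True rtranclp_symD[OF sE] rtranclp_trans[of E] by metis
    then show ?thesis unfolding reach_rel_def rtranclp_add_edge_iff[OF sE] by blast
  qed
  then show ?thesis by (simp add: num_comps_def)
next
  case False
  have "card (X // reach_rel X E) = card (X // reach_rel X (add_edges E {(u, v)})) + 1"
  proof (rule card_quotient_merge[OF fin equiv_reach_rel[OF sE] equiv_reach_rel[OF symp_add_edges[OF sE]] u v])
    show "(u, v) \<notin> reach_rel X E" using False by (simp add: reach_rel_def)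
  qed (use u v in \<open>simp add: reach_rel_def rtranclp_add_edge_iff[OF sE]\<close>)
  then show ?thesis by (simp add: num_comps_def)
qed

lemma num_comps_add_edges:
  assumes fin: "finite X" and sE: "symp E" and finF: "finite F" and FX: "F \<subseteq> X \<times> X"
  shows "num_comps X E \<le> num_comps X (add_edges E F) + card F"
  using finF FX
proof (induction F rule: finite_induct)
  case empty
  have "add_edges E {} = E" by (intro ext) (simp add: add_edges_def)
  then show ?case by simp
next
  case (insert e F)
  obtain u v where e: "e = (u, v)" by (cases e)
  have "add_edges E (insert e F) = add_edges (add_edges E F) {(u, v)}"
    by (intro ext) (auto simp: add_edges_def e)
  moreover have "u \<in> X" "v \<in> X" using insert.prems e by auto
  ultimately have "num_comps X (add_edges E F) \<le> num_comps X (add_edges E (insert e F)) + 1"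
    using num_comps_add_edge[OF fin symp_add_edges[OF sE]] by simp
  then show ?case using insert by simp
qed

lemma num_comps_le_one:
  assumes sE: "symp E" and x0: "x0 \<in> X" and all: "\<And>x. x \<in> X \<Longrightarrow> E\<^sup>*\<^sup>* x x0"
  shows "num_comps X E \<le> 1"
proof -
  have eq: "equiv X (reach_rel X E)" by (rule equiv_reach_rel[OF sE])
  have "X // reach_rel X E \<subseteq> {reach_rel X E `` {x0}}"
  proof
    fix C assume "C \<in> X // reach_rel X E"
    then obtain x where x: "x \<in> X" "C = reach_rel X E `` {x}" by (auto elim: quotientE)
    then have "(x, x0) \<in> reach_rel X E" using all x0 by (simp add: reach_rel_def)
    then show "C \<in> {reach_rel X E `` {x0}}" using x eq by (simp add: equiv_class_eq)
  qed
  then have "card (X // reach_rel X E) \<le> card {reach_rel X E `` {x0}}" by (rule card_mono[rotated]) simp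
  then show ?thesis unfolding num_comps_def by simp
qed

lemma card_le_num_comps:
  assumes sE: "symp E" and RX: "R \<subseteq> X" and fin: "finite X"
    and dis: "\<And>r1 r2. r1 \<in> R \<Longrightarrow> r2 \<in> R \<Longrightarrow> E\<^sup>*\<^sup>* r1 r2 \<Longrightarrow> r1 = r2"
  shows "card R \<le> num_comps X E"
proof -
  have eq: "equiv X (reach_rel X E)" by (rule equiv_reach_rel[OF sE])
  have inj: "inj_on (\<lambda>r. reach_rel X E `` {r}) R"
  proof (rule inj_onI)
    fix r1 r2 assume r: "r1 \<in> R" "r2 \<in> R" "reach_rel X E `` {r1} = reach_rel X E `` {r2}"
    then have "(r1, r2) \<in> reach_rel X E" using eq RX by (metis eq_equiv_class subsetD)
    then show "r1 = r2" using dis r by (simp add: reach_rel_def)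
  qed
  have sub: "(\<lambda>r. reach_rel X E `` {r}) ` R \<subseteq> X // reach_rel X E"
    using RX by (auto intro: quotientI)
  have fin_q: "finite (X // reach_rel X E)" using fin eq by (simp add: finite_quotient equiv_type)
  have "card ((\<lambda>r. reach_rel X E `` {r}) ` R) \<le> num_comps X E"
    unfolding num_comps_def using fin_q sub by (rule card_mono)
  then show ?thesis by (simp only: card_image[OF inj])
qed

section \<open>Components of a state\<close>

text \<open>Segment \<open>i\<close> of the diagram runs from point \<open>i\<close> to point \<open>i + 1\<close> (mod \<open>2m\<close>); its two ends
  are numbered \<open>2i\<close> and \<open>2i + 1\<close>, so \<open>2p\<close> is the end leaving point \<open>p\<close> and \<open>in_end G p\<close> the end
  arriving there. In a state, \<open>junction\<close> pairs the ends that are joined at a crossing point: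
  the two ends at the same point if the crossing is not smoothed (\<open>smoothing_type\<close> 0), and
  otherwise ends at the two points of the crossing, a leaving end with an arriving one for the
  oriented smoothing (type 1) and two ends of the same kind for the other one (type 2).\<close>

definition in_end :: "gauss \<Rightarrow> nat \<Rightarrow> nat" where
  "in_end G p = 2 * seg_in G p + 1"

definition end_point :: "gauss \<Rightarrow> nat \<Rightarrow> nat" where
  "end_point G e = (if even e then e div 2 else (e div 2 + 1) mod npts G)"

definition crossing_at :: "gauss \<Rightarrow> nat \<Rightarrow> nat" where
  "crossing_at G p = (THE c. c \<in> crossings G \<and> (ovr G c = p \<or> und G c = p))"

definition partner :: "gauss \<Rightarrow> nat \<Rightarrow> nat" where
  "partner G p = (if ovr G (crossing_at G p) = p then und G (crossing_at G p) else ovr G (crossing_at G p))"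

definition smoothing_type :: "gauss \<Rightarrow> nat set \<Rightarrow> (nat \<Rightarrow> nat) \<Rightarrow> nat \<Rightarrow> nat" where
  "smoothing_type G C s c = (if c \<notin> C then 0 else if oriented_smoothing G s c then 1 else 2)"

definition junction :: "gauss \<Rightarrow> nat set \<Rightarrow> (nat \<Rightarrow> nat) \<Rightarrow> nat \<Rightarrow> nat" where
  "junction G C s e = (let p = end_point G e; q = partner G p; md = smoothing_type G C s (crossing_at G p) in
     if md = 0 then (if even e then in_end G p else 2 * p)
     else if md = 1 then (if even e then in_end G q else 2 * q)
     else (if even e then 2 * q else in_end G q))"

definition other_end :: "nat \<Rightarrow> nat" where
  "other_end e = (if even e then e + 1 else e - 1)"

definition ends :: "gauss \<Rightarrow> nat set" where
  "ends G = {..<2 * npts G}"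

lemma gauss_points_image:
  assumes gd: "gauss_diagram G"
  shows "(\<lambda>(c, b). if b then ovr G c else und G c) ` (crossings G \<times> (UNIV :: bool set)) = {..<npts G}"
proof -
  let ?f = "\<lambda>(c, b). if b then ovr G c else und G c"
  let ?D = "crossings G \<times> (UNIV :: bool set)"
  have inj: "inj_on ?f ?D" using gd by (simp add: gauss_diagram_def)
  have sub: "?f ` ?D \<subseteq> {..<npts G}" using gd by (auto simp: gauss_diagram_def)
  have "card ?D = npts G" by (simp add: crossings_def npts_def card_cartesian_product)
  then have "card (?f ` ?D) = card {..<npts G}" using card_image[OF inj] by simp
  then show ?thesis using sub by (simp add: card_subset_eq)
qed

lemma gauss_diagram_inj:
  assumes gd: "gauss_diagram G" and c: "c \<in> crossings G" and d: "d \<in> crossings G"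
  shows "ovr G c = ovr G d \<longleftrightarrow> c = d" "und G c = und G d \<longleftrightarrow> c = d" "ovr G c \<noteq> und G d"
proof -
  have inj: "inj_on (\<lambda>(c, b). if b then ovr G c else und G c) (crossings G \<times> (UNIV :: bool set))"
    using gd by (simp add: gauss_diagram_def)
  show "ovr G c = ovr G d \<longleftrightarrow> c = d" using inj_onD[OF inj, of "(c, True)" "(d, True)"] c d by auto
  show "und G c = und G d \<longleftrightarrow> c = d" using inj_onD[OF inj, of "(c, False)" "(d, False)"] c d by auto
  show "ovr G c \<noteq> und G d" using inj_onD[OF inj, of "(c, True)" "(d, False)"] c d by auto
qed

lemma gauss_diagram_bounds:
  assumes gd: "gauss_diagram G" and c: "c \<in> crossings G"
  shows "ovr G c < npts G" "und G c < npts G"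
  using gd c by (auto simp: gauss_diagram_def)

lemma crossing_at_eqI:
  assumes gd: "gauss_diagram G" and c: "c \<in> crossings G" and p: "ovr G c = p \<or> und G c = p"
  shows "crossing_at G p = c"
  unfolding crossing_at_def
proof (rule the_equality)
  fix d assume "d \<in> crossings G \<and> (ovr G d = p \<or> und G d = p)"
  then have d: "d \<in> crossings G" and "ovr G d = p \<or> und G d = p" by auto
  then show "d = c"
    using p gauss_diagram_inj(1,2)[OF gd d c] gauss_diagram_inj(3)[OF gd c d] gauss_diagram_inj(3)[OF gd d c]
    by auto
qed (use c p in blast)

lemma crossing_at_spec:
  assumes gd: "gauss_diagram G" and p: "p < npts G"
  shows "crossing_at G p \<in> crossings G \<and> (ovr G (crossing_at G p) = p \<or> und G (crossing_at G p) = p)"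
proof -
  have "p \<in> (\<lambda>(c, b). if b then ovr G c else und G c) ` (crossings G \<times> (UNIV :: bool set))"
    using p gauss_points_image[OF gd] by simp
  then obtain c b where "c \<in> crossings G" "p = (if b then ovr G c else und G c)" by auto
  then show ?thesis using crossing_at_eqI[OF gd] by (cases b) auto
qed

lemma crossing_at_ovr_und:
  assumes "gauss_diagram G" and "c \<in> crossings G"
  shows "crossing_at G (ovr G c) = c" "crossing_at G (und G c) = c"
  using crossing_at_eqI[OF assms] by auto

lemma partner_props:
  assumes gd: "gauss_diagram G" and p: "p < npts G"
  shows "partner G p < npts G" "partner G p \<noteq> p"
    "crossing_at G (partner G p) = crossing_at G p" "partner G (partner G p) = p"
proof -
  obtain c where c: "c = crossing_at G p" by simp
  have cc: "c \<in> crossings G" "ovr G c = p \<or> und G c = p" using crossing_at_spec[OF gd p] c by auto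
  note b = gauss_diagram_bounds[OF gd cc(1)]
  have ne: "ovr G c \<noteq> und G c" using gauss_diagram_inj(3)[OF gd cc(1) cc(1)] .
  note ce = crossing_at_ovr_und[OF gd cc(1)]
  show "partner G p < npts G" using b by (simp add: partner_def c[symmetric])
  show "partner G p \<noteq> p" using cc ne by (auto simp: partner_def c[symmetric])
  show "crossing_at G (partner G p) = crossing_at G p" using ce by (simp add: partner_def c[symmetric])
  show "partner G (partner G p) = p" using cc ne ce by (auto simp: partner_def c[symmetric])
qed

lemma seg_in_lt: "npts G > 0 \<Longrightarrow> seg_in G p < npts G"
  by (simp add: seg_in_def)

lemma seg_in_val: "p < npts G \<Longrightarrow> seg_in G p = (if p = 0 then npts G - 1 else p - 1)"
proof (cases "p = 0")
  case True
  assume "p < npts G" then show ?thesis using True by (simp add: seg_in_def)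
next
  case False
  assume p: "p < npts G"
  have "p + npts G - 1 = (p - 1) + npts G" using False by simp
  then have "seg_in G p = (p - 1 + npts G) mod npts G" by (simp add: seg_in_def)
  also have "\<dots> = p - 1" using p by simp
  finally show ?thesis using False by simp
qed

lemma seg_in_inj: "p < npts G \<Longrightarrow> q < npts G \<Longrightarrow> seg_in G p = seg_in G q \<longleftrightarrow> p = q"
  using seg_in_val[of p G] seg_in_val[of q G] by auto


lemma junction_cong:
  "smoothing_type G C s (crossing_at G (end_point G e)) = smoothing_type G C s' (crossing_at G (end_point G e))
    \<Longrightarrow> junction G C s e = junction G C s' e"
  by (simp add: junction_def Let_def)

context
  fixes G :: gauss
  assumes gd: "gauss_diagram G" and pos: "ncr G > 0"
begin

lemma npts_pos: "npts G > 0" using pos by (simp add: npts_def)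

lemma in_end_props:
  assumes p: "p < npts G"
  shows "in_end G p < 2 * npts G" "odd (in_end G p)" "end_point G (in_end G p) = p"
    "in_end G p div 2 = seg_in G p"
proof -
  have s: "seg_in G p < npts G" using seg_in_lt npts_pos by blast
  show "in_end G p < 2 * npts G" using s by (simp add: in_end_def)
  show "odd (in_end G p)" by (simp add: in_end_def)
  show "in_end G p div 2 = seg_in G p" by (simp add: in_end_def)
  show "end_point G (in_end G p) = p"
  proof (cases "p = 0")
    case True
    then have "seg_in G p + 1 = npts G" using seg_in_val[OF p] npts_pos by simp
    then show ?thesis using True by (simp add: end_point_def in_end_def)
  next
    case False
    then have "seg_in G p + 1 = p" using seg_in_val[OF p] by simp
    then show ?thesis using p by (simp add: end_point_def in_end_def)
  qed
qed

lemma start_end_props: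
  assumes p: "p < npts G"
  shows "2 * p < 2 * npts G" "end_point G (2 * p) = p"
  using p by (auto simp: end_point_def)

lemma end_cases:
  assumes e: "e < 2 * npts G"
  shows "end_point G e < npts G" "even e \<Longrightarrow> e = 2 * end_point G e" "odd e \<Longrightarrow> e = in_end G (end_point G e)"
proof -
  show "end_point G e < npts G" using e npts_pos by (auto simp: end_point_def)
  show "even e \<Longrightarrow> e = 2 * end_point G e" by (simp add: end_point_def)
  assume o: "odd e"
  define i where "i = e div 2"
  have ei: "e = 2 * i + 1" using o by (simp add: i_def)
  have i: "i < npts G" using e ei by simp
  show "e = in_end G (end_point G e)"
  proof (cases "i + 1 = npts G")
    case True
    then have "end_point G e = 0" using o by (simp add: end_point_def i_def[symmetric])
    then show ?thesis using seg_in_val[of 0 G] npts_pos True ei by (simp add: in_end_def)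
  next
    case False
    then have pe: "end_point G e = i + 1" using o i by (simp add: end_point_def i_def[symmetric])
    then have "seg_in G (end_point G e) = i" using seg_in_val[of "i + 1" G] False i by simp
    then show ?thesis using ei by (simp add: in_end_def)
  qed
qed

lemma junction_start_end:
  assumes p: "p < npts G"
  shows "junction G C s (2 * p) = (if smoothing_type G C s (crossing_at G p) = 0 then in_end G p
      else if smoothing_type G C s (crossing_at G p) = 1 then in_end G (partner G p) else 2 * partner G p)"
  using start_end_props[OF p] by (simp add: junction_def Let_def)

lemma junction_in_end:
  assumes p: "p < npts G"
  shows "junction G C s (in_end G p) = (if smoothing_type G C s (crossing_at G p) = 0 then 2 * p
      else if smoothing_type G C s (crossing_at G p) = 1 then 2 * partner G p else in_end G (partner G p))"
  using in_end_props[OF p] by (simp add: junction_def Let_def)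

lemma in_end_inj: "p < npts G \<Longrightarrow> q < npts G \<Longrightarrow> in_end G p = in_end G q \<longleftrightarrow> p = q"
  using seg_in_inj by (simp add: in_end_def)

lemma in_end_neq_start: "in_end G p \<noteq> 2 * q"
  by (simp add: in_end_def) presburger

lemma start_neq_in_end: "2 * q \<noteq> in_end G p"
  using in_end_neq_start by metis

lemma junction_props:
  assumes e: "e < 2 * npts G"
  shows "junction G C s e < 2 * npts G \<and> junction G C s e \<noteq> e \<and> junction G C s (junction G C s e) = e"
proof -
  define p where "p = end_point G e"
  have p: "p < npts G" using end_cases(1)[OF e] by (simp add: p_def)
  define q where "q = partner G p"
  have q: "q < npts G" "q \<noteq> p" "crossing_at G q = crossing_at G p" "partner G q = p"
    using partner_props[OF gd p] by (auto simp: q_def)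
  note Ep = in_end_props[OF p] and Eq = in_end_props[OF q(1)]
    and Sp = start_end_props[OF p] and Sq = start_end_props[OF q(1)]
  have ne1: "in_end G p \<noteq> in_end G q" using in_end_inj[OF p q(1)] q(2) by simp
  have ne2: "2 * p \<noteq> 2 * q" using q(2) by simp
  show ?thesis
  proof (cases "even e")
    case True
    then have ee: "e = 2 * p" using end_cases(2)[OF e] by (simp add: p_def)
    show ?thesis
      using junction_start_end[OF p, of C s] junction_in_end[OF p, of C s]
        junction_in_end[OF q(1), of C s] junction_start_end[OF q(1), of C s]
        q Ep Eq Sp Sq ne1 ne2 in_end_neq_start start_neq_in_end
      unfolding ee q_def[symmetric] by auto
  next
    case False
    then have ee: "e = in_end G p" using end_cases(3)[OF e] by (simp add: p_def)
    show ?thesis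
      using junction_start_end[OF p, of C s] junction_in_end[OF p, of C s]
        junction_in_end[OF q(1), of C s] junction_start_end[OF q(1), of C s]
        q Ep Eq Sp Sq ne1 ne2 in_end_neq_start start_neq_in_end
      unfolding ee q_def[symmetric] by auto
  qed
qed

lemma fpf_invol_junction: "fpf_invol (ends G) (junction G C s)"
  unfolding fpf_invol_def ends_def using junction_props by auto

lemma fpf_invol_other_end: "fpf_invol (ends G) other_end"
  unfolding fpf_invol_def ends_def other_end_def by (auto simp: npts_def) presburger+


lemma partner_ovr_und:
  assumes c: "c \<in> crossings G"
  shows "partner G (ovr G c) = und G c" "partner G (und G c) = ovr G c"
  using crossing_at_ovr_und[OF gd c] gauss_diagram_inj(3)[OF gd c c] by (auto simp: partner_def)

lemma glued_junction:
  assumes e: "e < 2 * npts G"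
  shows "glued G C s (e div 2) (junction G C s e div 2) \<or> glued G C s (junction G C s e div 2) (e div 2)"
proof -
  define p where "p = end_point G e"
  have p: "p < npts G" using end_cases(1)[OF e] by (simp add: p_def)
  define c where "c = crossing_at G p"
  have c: "c \<in> crossings G" "ovr G c = p \<or> und G c = p"
    using crossing_at_spec[OF gd p] by (auto simp: c_def)
  note ou = partner_ovr_und[OF c(1)]
  have ee: "e = 2 * p \<or> e = in_end G p" using end_cases(2,3)[OF e] by (auto simp: p_def)
  note bS = junction_start_end[OF p, of C s] and bE = junction_in_end[OF p, of C s]
  note Ep = in_end_props[OF p]
  have q: "partner G p < npts G" using partner_props[OF gd p] by simp
  note Eq = in_end_props[OF q]
  have md: "smoothing_type G C s c = 0 \<longleftrightarrow> c \<notin> C"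
    "smoothing_type G C s c = 1 \<longleftrightarrow> c \<in> C \<and> oriented_smoothing G s c"
    by (auto simp: smoothing_type_def)
  from c(2) show ?thesis
  proof
    assume pc: "ovr G c = p"
    then have oq: "partner G p = und G c" using ou by simp
    from ee show ?thesis
    proof
      assume "e = 2 * p"
      then show ?thesis using bS Eq Ep oq pc c(1) md unfolding c_def[symmetric]
        by (cases "smoothing_type G C s c = 0"; cases "smoothing_type G C s c = 1";
          auto simp: glued_def Let_def; blast)
    next
      assume "e = in_end G p"
      then show ?thesis using bE Eq Ep oq pc c(1) md unfolding c_def[symmetric]
        by (cases "smoothing_type G C s c = 0"; cases "smoothing_type G C s c = 1";
          auto simp: glued_def Let_def; blast)
    qed
  next
    assume pc: "und G c = p"
    then have oq: "partner G p = ovr G c" using ou by simp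
    from ee show ?thesis
    proof
      assume "e = 2 * p"
      then show ?thesis using bS Eq Ep oq pc c(1) md unfolding c_def[symmetric]
        by (cases "smoothing_type G C s c = 0"; cases "smoothing_type G C s c = 1";
          auto simp: glued_def Let_def; blast)
    next
      assume "e = in_end G p"
      then show ?thesis using bE Eq Ep oq pc c(1) md unfolding c_def[symmetric]
        by (cases "smoothing_type G C s c = 0"; cases "smoothing_type G C s c = 1";
          auto simp: glued_def Let_def; blast)
    qed
  qed
qed

lemma glued_bounds:
  assumes "glued G C s i j"
  shows "i < npts G" "j < npts G"
  using assms gauss_diagram_bounds[OF gd] seg_in_lt[OF npts_pos]
  by (auto simp: glued_def Let_def split: if_splits)

lemma junction_of_glued:
  assumes gl: "glued G C s i j"
  shows "\<exists>e < 2 * npts G. e div 2 = i \<and> junction G C s e div 2 = j"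
proof -
  obtain c where c: "c \<in> crossings G" and h: "(let ip = seg_in G (ovr G c); op = ovr G c;
      iq = seg_in G (und G c); oq = und G c in
      if c \<notin> C then (i, j) \<in> {(ip, op), (iq, oq)}
      else if oriented_smoothing G s c then (i, j) \<in> {(ip, oq), (iq, op)}
      else (i, j) \<in> {(ip, iq), (op, oq)})" using gl by (auto simp: glued_def)
  note b = gauss_diagram_bounds[OF gd c]
  have "(i, j) \<in> (\<lambda>e. (e div 2, junction G C s e div 2)) ` {in_end G (ovr G c), in_end G (und G c), 2 * ovr G c}"
    using h in_end_props[OF b(1)] in_end_props[OF b(2)] junction_in_end[OF b(1), of C s]
      junction_in_end[OF b(2), of C s] junction_start_end[OF b(1), of C s]
      crossing_at_ovr_und[OF gd c] partner_ovr_und[OF c]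
    by (auto simp: Let_def smoothing_type_def split: if_splits)
  then show ?thesis
  proof (rule imageE)
    fix e assume ij: "(i, j) = (e div 2, junction G C s e div 2)"
      and "e \<in> {in_end G (ovr G c), in_end G (und G c), 2 * ovr G c}"
    then have "e < 2 * npts G" using in_end_props(1)[OF b(1)] in_end_props(1)[OF b(2)] b by auto
    with ij show ?thesis by blast
  qed
qed

abbreviation "glued_sym C s \<equiv> (\<lambda>i j. glued G C s i j \<or> glued G C s j i)"

lemma other_end_div: "other_end e div 2 = e div 2"
  by (auto simp: other_end_def elim!: evenE oddE)

lemma junction_path_glued:
  assumes "(graph2 (ends G) other_end (junction G C s))\<^sup>*\<^sup>* e f"
  shows "(glued_sym C s)\<^sup>*\<^sup>* (e div 2) (f div 2)"
  using assms
proof (induction rule: rtranclp_induct)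
  case base then show ?case by simp
next
  case (step w w')
  then have w: "w < 2 * npts G" and ww: "w' = other_end w \<or> w' = junction G C s w"
    by (auto simp: graph2_def ends_def)
  from ww show ?case
  proof
    assume "w' = other_end w" then show ?thesis using step.IH other_end_div by simp
  next
    assume "w' = junction G C s w"
    then have "glued_sym C s (w div 2) (w' div 2)" using glued_junction[OF w] by auto
    then show ?thesis using step.IH by (rule rtranclp.rtrancl_into_rtrancl[rotated])
  qed
qed

lemma same_segment_connected:
  assumes e: "e < 2 * npts G" and f: "f < 2 * npts G" and d: "e div 2 = f div 2"
  shows "(graph2 (ends G) other_end (junction G C s))\<^sup>*\<^sup>* e f"
proof (cases "e = f")
  case True then show ?thesis by simp
next
  case False
  then have "f = other_end e" using d by (simp add: other_end_def) presburger
  then have "graph2 (ends G) other_end (junction G C s) e f" using e f by (simp add: graph2_def ends_def)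
  then show ?thesis by auto
qed

lemma glued_path_bounds:
  assumes "(glued_sym C s)\<^sup>*\<^sup>* i j" and "i < npts G"
  shows "j < npts G"
  using assms by (induction rule: rtranclp_induct) (auto dest: glued_bounds)

lemma glued_path_junction:
  assumes "(glued_sym C s)\<^sup>*\<^sup>* i j" and i: "i < npts G"
  shows "(graph2 (ends G) other_end (junction G C s))\<^sup>*\<^sup>* (2 * i) (2 * j)"
  using assms(1)
proof (induction rule: rtranclp_induct)
  case base then show ?case by simp
next
  case (step j k)
  let ?E = "graph2 (ends G) other_end (junction G C s)"
  have sE: "symp ?E" using symp_graph2[OF fpf_invol_other_end fpf_invol_junction] .
  have jk: "j < npts G" "k < npts G" using step.hyps(2) glued_bounds by auto
  have "?E\<^sup>*\<^sup>* (2 * j) (2 * k)"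
  proof (cases "glued G C s j k")
    case True
    then obtain e where e: "e < 2 * npts G" "e div 2 = j" "junction G C s e div 2 = k"
      using junction_of_glued by blast
    have be: "junction G C s e < 2 * npts G" using junction_props[OF e(1)] by simp
    have "?E\<^sup>*\<^sup>* (2 * j) e" using same_segment_connected[OF _ e(1)] jk e by simp
    moreover have "?E e (junction G C s e)" using e be by (simp add: graph2_def ends_def)
    moreover have "?E\<^sup>*\<^sup>* (junction G C s e) (2 * k)" using same_segment_connected[OF be] jk e by simp
    ultimately show ?thesis by (meson rtranclp.rtrancl_into_rtrancl rtranclp_trans)
  next
    case False
    then have "glued G C s k j" using step.hyps(2) by simp
    then obtain e where e: "e < 2 * npts G" "e div 2 = k" "junction G C s e div 2 = j"
      using junction_of_glued by blast
    have be: "junction G C s e < 2 * npts G" using junction_props[OF e(1)] by simp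
    have "?E\<^sup>*\<^sup>* (2 * j) (junction G C s e)" using same_segment_connected[OF _ be] jk e by simp
    moreover have "?E (junction G C s e) e"
      using e be junction_props[OF e(1)] by (simp add: graph2_def ends_def)
    moreover have "?E\<^sup>*\<^sup>* e (2 * k)" using same_segment_connected[OF e(1)] jk e by simp
    ultimately show ?thesis by (meson rtranclp.rtrancl_into_rtrancl rtranclp_trans)
  qed
  then show ?case using step.IH by (rule rtranclp_trans[rotated])
qed

lemma ncomp_eq_num_comps:
  "ncomp G C s = num_comps (ends G) (graph2 (ends G) other_end (junction G C s))"
proof -
  let ?E = "graph2 (ends G) other_end (junction G C s)"
  let ?N = "npts G"
  define rY where "rY = {(i, j). i < ?N \<and> j < ?N \<and> (glued_sym C s)\<^sup>*\<^sup>* i j}"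
  have q: "{..<?N} // {(i, j). same_component G C s i j} = {..<?N} // rY"
  proof -
    have "{(i, j). same_component G C s i j} `` {x} = rY `` {x}" if "x < ?N" for x
      using that glued_path_bounds by (auto simp: rY_def same_component_def)
    then show ?thesis unfolding quotient_def by auto
  qed
  have sR: "symp (glued_sym C s)" by (auto simp: symp_def)
  have eY: "equiv {..<?N} rY" unfolding rY_def equiv_def refl_on_def sym_def trans_def
    using rtranclp_symD[OF sR] by (auto intro: rtranclp_trans)
  have img: "(\<lambda>e. e div 2) ` ends G = {..<?N}"
  proof
    show "(\<lambda>e. e div 2) ` ends G \<subseteq> {..<?N}" by (auto simp: ends_def)
    show "{..<?N} \<subseteq> (\<lambda>e. e div 2) ` ends G"
    proof
      fix i assume "i \<in> {..<?N}"
      then have "2 * i \<in> ends G" "(2 * i) div 2 = i" by (auto simp: ends_def)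
      then show "i \<in> (\<lambda>e. e div 2) ` ends G" by (metis image_eqI)
    qed
  qed
  have sE: "symp ?E" using symp_graph2[OF fpf_invol_other_end fpf_invol_junction] .
  have "card (ends G // reach_rel (ends G) ?E) = card ({..<?N} // rY)"
  proof (rule card_quotient_eq_of_image[OF equiv_reach_rel[OF sE] eY img])
    fix a b assume a: "a \<in> ends G" and b: "b \<in> ends G"
    show "(a, b) \<in> reach_rel (ends G) ?E \<longleftrightarrow> (a div 2, b div 2) \<in> rY"
    proof
      assume "(a, b) \<in> reach_rel (ends G) ?E"
      then show "(a div 2, b div 2) \<in> rY"
        using junction_path_glued a b by (auto simp: reach_rel_def rY_def ends_def)
    next
      assume "(a div 2, b div 2) \<in> rY"
      then have h: "?E\<^sup>*\<^sup>* (2 * (a div 2)) (2 * (b div 2))"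
        using glued_path_junction by (auto simp: rY_def)
      have "?E\<^sup>*\<^sup>* a (2 * (a div 2))" using same_segment_connected a by (auto simp: ends_def)
      moreover have "?E\<^sup>*\<^sup>* (2 * (b div 2)) b" using same_segment_connected b by (auto simp: ends_def)
      ultimately show "(a, b) \<in> reach_rel (ends G) ?E"
        using h a b by (auto simp: reach_rel_def intro: rtranclp_trans)
    qed
  qed
  then show ?thesis using q pos by (simp add: ncomp_def num_comps_def)
qed


lemma crossing_at_junction:
  assumes e: "e < 2 * npts G"
  shows "crossing_at G (end_point G (junction G C s e)) = crossing_at G (end_point G e)"
proof -
  define p where "p = end_point G e"
  have p: "p < npts G" using end_cases(1)[OF e] by (simp add: p_def)
  have q: "partner G p < npts G" "crossing_at G (partner G p) = crossing_at G p"
    using partner_props[OF gd p] by auto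
  note Ep = in_end_props[OF p] and Eq = in_end_props[OF q(1)]
  note Sp = start_end_props[OF p] and Sq = start_end_props[OF q(1)]
  have "e = 2 * p \<or> e = in_end G p" using end_cases(2,3)[OF e] by (auto simp: p_def)
  then show ?thesis
    using junction_start_end[OF p, of C s] junction_in_end[OF p, of C s] Ep Eq Sp Sq q
    unfolding p_def[symmetric] by auto
qed

lemma crossing_at_junction_path:
  assumes "(graph2 (ends G) (junction G C s) (junction G C s'))\<^sup>*\<^sup>* e f"
  shows "crossing_at G (end_point G f) = crossing_at G (end_point G e)"
  using assms
proof (induction rule: rtranclp_induct)
  case base then show ?case by simp
next
  case (step w w')
  then have "w < 2 * npts G" "w' = junction G C s w \<or> w' = junction G C s' w"
    by (auto simp: graph2_def ends_def)
  then show ?case using step.IH crossing_at_junction by auto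
qed


lemma junction_reach_agree:
  assumes e: "e \<in> ends G"
    and agree: "smoothing_type G C s (crossing_at G (end_point G e))
      = smoothing_type G C s' (crossing_at G (end_point G e))"
    and path: "(graph2 (ends G) (junction G C s) (junction G C s'))\<^sup>*\<^sup>* e z"
  shows "z = e \<or> z = junction G C s e"
  using path
proof induction
  case (step z z')
  then have "z \<in> ends G" "z' = junction G C s z \<or> z' = junction G C s' z" by (auto simp: graph2_def)
  moreover have "junction G C s' z = junction G C s z"
    using junction_cong[of G C s z s'] crossing_at_junction_path[OF step.hyps(1)] agree by simp
  ultimately show ?case using step.IH junction_props[of e C s] e by (auto simp: ends_def)
qed simp

text \<open>Junction paths stay at one crossing, so each crossing contributes at least one component,
  and a crossing smoothed alike by both states at least two: the end \<open>2 \<cdot> ovr c\<close> and its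
  junction partner form a whole component.\<close>

lemma num_comps_junctions_lower:
  "2 * ncr G \<le> num_comps (ends G) (graph2 (ends G) (junction G C s) (junction G C s'))
    + card {c \<in> crossings G. smoothing_type G C s c \<noteq> smoothing_type G C s' c}"
proof -
  let ?X = "ends G" and ?b = "junction G C s"
  let ?E = "graph2 ?X ?b (junction G C s')"
  define A where "A = {c \<in> crossings G. smoothing_type G C s c = smoothing_type G C s' c}"
  define f where "f c = 2 * ovr G c" for c
  define w where "w c = (if ?b (f c) = in_end G (ovr G c) then 2 * und G c else in_end G (ovr G c))" for c
  have sE: "symp ?E" using symp_graph2[OF fpf_invol_junction fpf_invol_junction] .
  have finC: "finite (crossings G)" by (simp add: crossings_def)
  have AC: "A \<subseteq> crossings G" by (auto simp: A_def)
  have bnd: "ovr G c < npts G" "und G c < npts G" if "c \<in> crossings G" for c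
    using gauss_diagram_bounds[OF gd that] by auto
  have ptf: "crossing_at G (end_point G (f c)) = c" if "c \<in> crossings G" for c
    using start_end_props(2)[OF bnd(1)[OF that]] crossing_at_ovr_und[OF gd that] by (simp add: f_def)
  have ptw: "crossing_at G (end_point G (w c)) = c" if "c \<in> crossings G" for c
    using start_end_props(2)[OF bnd(2)[OF that]] in_end_props(3)[OF bnd(1)[OF that]]
      crossing_at_ovr_und[OF gd that] by (simp add: w_def)
  have fw: "w c \<noteq> f c" "w c \<noteq> ?b (f c)" if "c \<in> crossings G" for c
    using gauss_diagram_inj(3)[OF gd that that] in_end_neq_start start_neq_in_end
    by (auto simp: f_def w_def)
  have injf: "inj_on f (crossings G)"
    by (rule inj_on_inverseI[where g = "\<lambda>e. crossing_at G (end_point G e)"]) (use ptf in auto)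
  have injw: "inj_on w A"
    by (rule inj_on_inverseI[where g = "\<lambda>e. crossing_at G (end_point G e)"]) (use ptw AC in auto)
  have disj: "f ` crossings G \<inter> w ` A = {}" using ptf ptw fw AC by force
  define R where "R = f ` crossings G \<union> w ` A"
  have "card R = ncr G + card A"
    unfolding R_def using card_Un_disjoint[OF _ _ disj] card_image[OF injf] card_image[OF injw] finC AC
    by (simp add: crossings_def finite_subset)
  moreover have "card R \<le> num_comps ?X ?E"
  proof (rule card_le_num_comps[OF sE])
    show "R \<subseteq> ?X" using bnd in_end_props(1) AC by (auto simp: R_def f_def w_def ends_def)
    have not_fw: "\<not> ?E\<^sup>*\<^sup>* (f c) (w c)" if c: "c \<in> A" for c
    proof
      have "f c \<in> ?X" using bnd c AC by (auto simp: f_def ends_def)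
      moreover assume "?E\<^sup>*\<^sup>* (f c) (w c)"
      ultimately show False
        using junction_reach_agree[of "f c" C s s' "w c"] ptf[of c] fw[of c] c by (auto simp: A_def)
    qed
    fix r1 r2 assume r: "r1 \<in> R" "r2 \<in> R" and path: "?E\<^sup>*\<^sup>* r1 r2"
    obtain c1 where c1: "c1 \<in> crossings G" "r1 = f c1 \<or> r1 = w c1 \<and> c1 \<in> A"
      using r(1) AC by (auto simp: R_def)
    obtain c2 where c2: "c2 \<in> crossings G" "r2 = f c2 \<or> r2 = w c2 \<and> c2 \<in> A"
      using r(2) AC by (auto simp: R_def)
    have "c1 = c2" using crossing_at_junction_path[OF path] c1 c2 ptf ptw by metis
    then show "r1 = r2" using c1 c2 not_fw path rtranclp_symD[OF sE path] by auto
  qed (simp add: ends_def)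
  moreover have "card A + card {c \<in> crossings G. smoothing_type G C s c \<noteq> smoothing_type G C s' c} = ncr G"
    using card_filter_split[OF finC] by (simp add: A_def crossings_def)
  ultimately show ?thesis by simp
qed

lemma junction_loop_partner:
  assumes p: "p < npts G" and sH: "symp H"
    and b: "\<And>e. e \<in> ends G \<Longrightarrow> H e (junction G C s e)"
    and smoothed: "smoothing_type G C s (crossing_at G p) \<noteq> 0"
    and loop: "H\<^sup>*\<^sup>* (in_end G (partner G p)) (2 * partner G p)"
  shows "H\<^sup>*\<^sup>* (in_end G p) (2 * p)"
proof -
  define q where "q = partner G p"
  have q: "q < npts G" using partner_props[OF gd p] by (simp add: q_def)
  have ends: "in_end G p \<in> ends G" "2 * p \<in> ends G"
    using in_end_props(1)[OF p] p by (auto simp: ends_def)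
  have s: "H\<^sup>*\<^sup>* v u" if "H\<^sup>*\<^sup>* u v" for u v using rtranclp_symD[OF sH that] .
  have loop': "H\<^sup>*\<^sup>* (2 * q) (in_end G q)" using s loop by (simp add: q_def)
  have "smoothing_type G C s (crossing_at G p) \<in> {1, 2}"
    using smoothed by (auto simp: smoothing_type_def split: if_splits)
  then consider "junction G C s (in_end G p) = 2 * q" "junction G C s (2 * p) = in_end G q"
    | "junction G C s (in_end G p) = in_end G q" "junction G C s (2 * p) = 2 * q"
    using junction_in_end[OF p, of C s] junction_start_end[OF p, of C s] by (auto simp: q_def)
  then show ?thesis
  proof cases
    case 1
    then have "H\<^sup>*\<^sup>* (in_end G p) (2 * q)" "H\<^sup>*\<^sup>* (in_end G q) (2 * p)"
      using b[OF ends(1)] b[OF ends(2)] s by auto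
    then show ?thesis using loop' by (meson rtranclp_trans)
  next
    case 2
    then have "H\<^sup>*\<^sup>* (in_end G p) (in_end G q)" "H\<^sup>*\<^sup>* (2 * q) (2 * p)"
      using b[OF ends(1)] b[OF ends(2)] s by auto
    then show ?thesis using loop unfolding q_def[symmetric] by (meson rtranclp_trans)
  qed
qed

lemma in_end_reach_start:
  assumes p: "p < npts G" and sH: "symp H"
    and b: "\<And>e. e \<in> ends G \<Longrightarrow> H e (junction G C s e)"
    and b': "\<And>e. e \<in> ends G \<Longrightarrow> H e (junction G C s' e)"
    and agree_edge: "\<And>c. c \<in> C \<Longrightarrow> smoothing_type G C s c = smoothing_type G C s' c
      \<Longrightarrow> H (in_end G (ovr G c)) (2 * ovr G c)"
  shows "H\<^sup>*\<^sup>* (in_end G p) (2 * p)"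
proof -
  define c where "c = crossing_at G p"
  have c: "c \<in> crossings G" "ovr G c = p \<or> und G c = p"
    using crossing_at_spec[OF gd p] by (auto simp: c_def)
  define q where "q = partner G p"
  have q: "q < npts G" "crossing_at G q = c" "partner G q = p"
    using partner_props[OF gd p] by (auto simp: q_def c_def)
  have ends: "in_end G p \<in> ends G" "in_end G q \<in> ends G" "2 * q \<in> ends G"
    using in_end_props(1)[OF p] in_end_props(1)[OF q(1)] q(1) by (auto simp: ends_def)
  consider (unsmoothed) "smoothing_type G C s c = 0"
    | (agree) "c \<in> C" "smoothing_type G C s c \<noteq> 0" "smoothing_type G C s c = smoothing_type G C s' c"
    | (oriented_first) "smoothing_type G C s c = 1" "smoothing_type G C s' c = 2"
    | (oriented_second) "smoothing_type G C s c = 2" "smoothing_type G C s' c = 1"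
    by (cases "c \<in> C"; cases "oriented_smoothing G s c"; cases "oriented_smoothing G s' c")
      (auto simp: smoothing_type_def)
  then show ?thesis
  proof cases
    case unsmoothed
    then show ?thesis using b[OF ends(1)] junction_in_end[OF p, of C s] by (simp add: c_def)
  next
    case agree
    show ?thesis
    proof (cases "ovr G c = p")
      case True
      then show ?thesis using agree(1,3) agree_edge[of c] by auto
    next
      case False
      then have "q = ovr G c" using c partner_ovr_und[OF c(1)] by (simp add: q_def)
      then have "H\<^sup>*\<^sup>* (in_end G q) (2 * q)" using agree(1,3) agree_edge[of c] by auto
      then show ?thesis
        using junction_loop_partner[OF p sH b] agree(2) by (simp add: c_def q_def)
    qed
  next
    case oriented_first
    then have "junction G C s (in_end G p) = 2 * q" "junction G C s' (2 * q) = 2 * p"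
      using junction_in_end[OF p, of C s] junction_start_end[OF q(1), of C s'] q
        by (simp_all add: c_def q_def)
    then show ?thesis
      using b[OF ends(1)] b'[OF ends(3)] by (metis converse_rtranclp_into_rtranclp r_into_rtranclp)
  next
    case oriented_second
    then have "junction G C s (in_end G p) = in_end G q" "junction G C s' (in_end G q) = 2 * p"
      using junction_in_end[OF p, of C s] junction_in_end[OF q(1), of C s'] q
        by (simp_all add: c_def q_def)
    then show ?thesis
      using b[OF ends(1)] b'[OF ends(2)] by (metis converse_rtranclp_into_rtranclp r_into_rtranclp)
  qed
qed

text \<open>Going once around the circle: segment \<open>i\<close> ends at point \<open>i + 1\<close>, where the end of
  segment \<open>i\<close> is connected to the start of segment \<open>i + 1\<close>.\<close>

lemma num_comps_le_one_if_loops: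
  assumes sH: "symp H" and a: "\<And>e. e \<in> ends G \<Longrightarrow> H e (other_end e)"
    and loops: "\<And>p. p < npts G \<Longrightarrow> H\<^sup>*\<^sup>* (in_end G p) (2 * p)"
  shows "num_comps (ends G) H \<le> 1"
proof (rule num_comps_le_one[OF sH])
  have Hs: "H\<^sup>*\<^sup>* v u" if "H\<^sup>*\<^sup>* u v" for u v using rtranclp_symD[OF sH that] .
  have start: "H\<^sup>*\<^sup>* (2 * i) 0" if "i < npts G" for i
    using that
  proof (induction i)
    case (Suc i)
    have "in_end G (Suc i) = 2 * i + 1" using seg_in_val[OF Suc.prems] by (simp add: in_end_def)
    then have "H\<^sup>*\<^sup>* (2 * Suc i) (2 * i + 1)" using loops[OF Suc.prems] Hs by metis
    moreover have "H (2 * i + 1) (2 * i)"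
      using a[of "2 * i + 1"] Suc.prems by (simp add: ends_def other_end_def)
    ultimately show ?case using Suc by (meson Suc_lessD rtranclp.rtrancl_into_rtrancl rtranclp_trans)
  qed simp
  fix e assume e: "e \<in> ends G"
  show "H\<^sup>*\<^sup>* e 0"
  proof (cases "even e")
    case True
    then show ?thesis using start[of "e div 2"] e by (auto simp: ends_def)
  next
    case False
    then have "other_end e = 2 * (e div 2)" "e div 2 < npts G"
      using e by (auto simp: ends_def other_end_def elim!: oddE)
    then show ?thesis using start a[OF e] by (metis converse_rtranclp_into_rtranclp)
  qed
qed (use npts_pos in \<open>simp add: ends_def\<close>)

text \<open>One extra edge per crossing smoothed alike by both states makes the three-coloured graph
  connected.\<close>

lemma num_comps_graph3_upper:
  assumes CC: "C \<subseteq> crossings G"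
  shows "num_comps (ends G) (graph3 (ends G) other_end (junction G C s) (junction G C s'))
    \<le> 1 + card {c \<in> C. smoothing_type G C s c = smoothing_type G C s' c}"
proof -
  let ?X = "ends G" and ?E = "graph3 (ends G) other_end (junction G C s) (junction G C s')"
  define Ag where "Ag = {c \<in> C. smoothing_type G C s c = smoothing_type G C s' c}"
  define F where "F = (\<lambda>c. (in_end G (ovr G c), 2 * ovr G c)) ` Ag"
  define H where "H = add_edges ?E F"
  have finAg: "finite Ag" using CC by (auto simp: Ag_def crossings_def intro: finite_subset)
  have FX: "F \<subseteq> ?X \<times> ?X"
    using gauss_diagram_bounds[OF gd] in_end_props(1) CC by (auto simp: F_def Ag_def ends_def)
  have sE: "symp ?E" using symp_graph3[OF fpf_invol_other_end fpf_invol_junction fpf_invol_junction] .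
  have sH: "symp H" unfolding H_def by (rule symp_add_edges[OF sE])
  have "num_comps ?X ?E \<le> num_comps ?X H + card F"
    unfolding H_def by (rule num_comps_add_edges[OF _ sE _ FX]) (auto simp: ends_def F_def finAg)
  moreover have "card F \<le> card Ag" unfolding F_def by (rule card_image_le[OF finAg])
  moreover have "num_comps ?X H \<le> 1"
  proof (rule num_comps_le_one_if_loops[OF sH])
    have E_H: "H u v" if "?E u v" for u v using that by (simp add: H_def add_edges_def)
    have "e \<in> ?X \<Longrightarrow> ?E e (other_end e)" "e \<in> ?X \<Longrightarrow> ?E e (junction G C s e)"
      "e \<in> ?X \<Longrightarrow> ?E e (junction G C s' e)" for e
      using fpf_involD[OF fpf_invol_other_end] fpf_involD[OF fpf_invol_junction]
        by (auto simp: graph3_def)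
    then show "H e (other_end e)" if "e \<in> ?X" for e using E_H that by blast
    fix p assume p: "p < npts G"
    show "H\<^sup>*\<^sup>* (in_end G p) (2 * p)"
    proof (rule in_end_reach_start[OF p sH])
      show "H e (junction G C s e)" "H e (junction G C s' e)" if "e \<in> ?X" for e
        using E_H that \<open>\<And>e. e \<in> ?X \<Longrightarrow> ?E e (junction G C s e)\<close>
          \<open>\<And>e. e \<in> ?X \<Longrightarrow> ?E e (junction G C s' e)\<close> by blast+
      show "H (in_end G (ovr G c)) (2 * ovr G c)"
        if "c \<in> C" "smoothing_type G C s c = smoothing_type G C s' c" for c
        using that by (auto simp: H_def add_edges_def F_def Ag_def)
    qed
  qed
  ultimately show ?thesis by (simp add: Ag_def)
qed

lemma ncomp_pair_bound:
  assumes CC: "C \<subseteq> crossings G"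
  shows "ncomp G C s + ncomp G C s' + card {c \<in> C. smoothing_type G C s c \<noteq> smoothing_type G C s' c}
    \<le> 2 + 2 * card C"
proof -
  let ?X = "ends G" and ?b = "junction G C s" and ?b' = "junction G C s'"
  have "2 * (ncomp G C s + ncomp G C s' + num_comps ?X (graph2 ?X ?b ?b'))
      \<le> card ?X + 4 * num_comps ?X (graph3 ?X other_end ?b ?b')"
    using euler_ineq_fpf_invol[OF _ fpf_invol_other_end fpf_invol_junction fpf_invol_junction]
    by (simp add: ncomp_eq_num_comps ends_def)
  moreover have "{c \<in> crossings G. smoothing_type G C s c \<noteq> smoothing_type G C s' c}
      = {c \<in> C. smoothing_type G C s c \<noteq> smoothing_type G C s' c}"
    using CC by (auto simp: smoothing_type_def)
  with num_comps_junctions_lower[of C s s'] have "2 * ncr G \<le> num_comps ?X (graph2 ?X ?b ?b')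
      + card {c \<in> C. smoothing_type G C s c \<noteq> smoothing_type G C s' c}"
    by simp
  moreover have "num_comps ?X (graph3 ?X other_end ?b ?b')
      \<le> 1 + card {c \<in> C. smoothing_type G C s c = smoothing_type G C s' c}"
    by (rule num_comps_graph3_upper[OF CC])
  moreover have "card {c \<in> C. smoothing_type G C s c = smoothing_type G C s' c}
      + card {c \<in> C. smoothing_type G C s c \<noteq> smoothing_type G C s' c} = card C"
    using CC by (intro card_filter_split) (auto simp: crossings_def intro: finite_subset)
  moreover have "card ?X = 4 * ncr G" by (simp add: ends_def npts_def)
  ultimately show ?thesis by presburger
qed

end

section \<open>The span of the Jones polynomial\<close>

lemma fls_intpow_times_nth: "fls_nth (fls_X_intpow i * (g :: int fls)) n = fls_nth g (n - i)"
  by (simp add: fls_X_intpow_times_conv_shift)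

lemma loop_factor_pow_support:
  assumes "fls_nth ((- (fls_X ^ 2) - fls_X_inv ^ 2 :: int fls) ^ N) d \<noteq> 0"
  shows "- 2 * int N \<le> d \<and> d \<le> 2 * int N"
  using assms
proof (induction N arbitrary: d)
  case (Suc N)
  let ?g = "(- (fls_X ^ 2) - fls_X_inv ^ 2 :: int fls) ^ N"
  have "(- (fls_X ^ 2) - fls_X_inv ^ 2 :: int fls) ^ Suc N = - (fls_X ^ 2 * ?g) - fls_X_inv ^ 2 * ?g"
    by (simp add: algebra_simps)
  then have "fls_nth ((- (fls_X ^ 2) - fls_X_inv ^ 2 :: int fls) ^ Suc N) d
      = - fls_nth ?g (d - 2) - fls_nth ?g (d + 2)"
    by (simp add: fls_X_power_times_conv_shift fls_X_inv_power_times_conv_shift)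
  then have "fls_nth ?g (d - 2) \<noteq> 0 \<or> fls_nth ?g (d + 2) \<noteq> 0" using Suc.prems by auto
  then show ?case using Suc.IH by force
qed (simp split: if_splits)

lemma ncomp_pos: "gauss_diagram G \<Longrightarrow> ncomp G C s \<ge> 1"
proof (cases "ncr G = 0")
  case False
  then have "0 \<in> {..<npts G}" by (simp add: npts_def)
  then have "{..<npts G} // {(i, j). same_component G C s i j} \<noteq> {}" by (auto simp: quotient_def)
  moreover have "finite ({..<npts G} // {(i, j). same_component G C s i j})"
    unfolding quotient_def by simp
  ultimately show ?thesis using False by (simp add: ncomp_def Suc_le_eq card_gt_0_iff)
qed (simp add: ncomp_def)

lemma ncomp_states_bound:
  assumes gd: "gauss_diagram G" and CC: "C \<subseteq> crossings G"
    and s1: "s1 \<in> C \<rightarrow>\<^sub>E {0, 1}" and s2: "s2 \<in> C \<rightarrow>\<^sub>E {0, 1}"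
  shows "ncomp G C s1 + ncomp G C s2 + card {c \<in> C. s1 c \<noteq> s2 c} \<le> 2 + 2 * card C"
proof (cases "ncr G = 0")
  case True
  then have "C = {}" using CC by (simp add: crossings_def)
  then show ?thesis using True by (simp add: ncomp_def)
next
  case False
  have "smoothing_type G C s1 c \<noteq> smoothing_type G C s2 c \<longleftrightarrow> s1 c \<noteq> s2 c" if c: "c \<in> C" for c
  proof -
    have "s1 c \<in> {0, 1}" "s2 c \<in> {0, 1}" using s1 s2 c by auto
    then show ?thesis using c by (auto simp: smoothing_type_def oriented_smoothing_def)
  qed
  then have "{c \<in> C. smoothing_type G C s1 c \<noteq> smoothing_type G C s2 c} = {c \<in> C. s1 c \<noteq> s2 c}"
    by auto
  then show ?thesis using ncomp_pair_bound[OF gd _ CC, of s1 s2] False by simp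
qed

definition state_degree :: "nat set \<Rightarrow> (nat \<Rightarrow> nat) \<Rightarrow> int" where
  "state_degree C s = int (card {c \<in> C. s c = 0}) - int (card {c \<in> C. s c = 1})"

lemma state_degree_diff:
  fixes s1 s2 :: "nat \<Rightarrow> nat"
  assumes finC: "finite C" and s1: "s1 \<in> C \<rightarrow>\<^sub>E {0, 1}" and s2: "s2 \<in> C \<rightarrow>\<^sub>E {0, 1}"
  shows "state_degree C s1 - state_degree C s2 \<le> 2 * int (card {c \<in> C. s1 c \<noteq> s2 c})"
proof -
  have split: "card {c \<in> C. s c = 0} + card {c \<in> C. s c = 1} = card C"
    if s: "s \<in> C \<rightarrow>\<^sub>E {0, 1}" for s :: "nat \<Rightarrow> nat"
  proof -
    have "{c \<in> C. s c = 0} \<union> {c \<in> C. s c = 1} = C" using s by auto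
    moreover have "{c \<in> C. s c = 0} \<inter> {c \<in> C. s c = 1} = {}" by auto
    ultimately show ?thesis using finC by (metis (no_types, lifting) card_Un_disjoint finite_Un)
  qed
  have "card {c \<in> C. s1 c = 0} \<le> card ({c \<in> C. s2 c = 0} \<union> {c \<in> C. s1 c \<noteq> s2 c})"
    using finC by (intro card_mono) auto
  also have "\<dots> \<le> card {c \<in> C. s2 c = 0} + card {c \<in> C. s1 c \<noteq> s2 c}" by (rule card_Un_le)
  finally show ?thesis using split[OF s1] split[OF s2] unfolding state_degree_def by linarith
qed

lemma bracket_support:
  assumes "fls_nth (bracket_n G n) d \<noteq> 0"
  shows "\<exists>s \<in> Cn G n \<rightarrow>\<^sub>E {0, 1}. state_degree (Cn G n) s - 2 * int (ncomp G (Cn G n) s - 1) \<le> d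
    \<and> d \<le> state_degree (Cn G n) s + 2 * int (ncomp G (Cn G n) s - 1)"
proof (rule ccontr)
  let ?L = "\<lambda>s. (- (fls_X ^ 2) - fls_X_inv ^ 2 :: int fls) ^ (ncomp G (Cn G n) s - 1)"
  assume "\<not> ?thesis"
  then have "fls_nth (?L s) (d - state_degree (Cn G n) s) = 0" if "s \<in> Cn G n \<rightarrow>\<^sub>E {0, 1}" for s
    using that loop_factor_pow_support[of "ncomp G (Cn G n) s - 1" "d - state_degree (Cn G n) s"]
      by force
  then have "fls_nth (bracket_n G n) d = 0"
    unfolding bracket_n_def fls_nth_sum fls_intpow_times_nth state_degree_def by simp
  with assms show False by simp
qed

lemma fls_nth_jones_n_A:
  "fls_nth (jones_n_A G n) d = (-1) ^ nat \<bar>writhe G\<bar> * fls_nth (bracket_n G n) (d + 3 * writhe G)"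
proof -
  have "fls_nth (fls_shift m 1 * (g :: int fls)) d = fls_nth g (d + m)" for m g
    using fls_intpow_times_nth[of "- m" g d] by simp
  then show ?thesis by (cases "even (nat \<bar>writhe G\<bar>)") (simp_all add: jones_n_A_def mult.assoc)
qed

lemma jones_support_width:
  assumes gd: "gauss_diagram K"
    and d1: "fls_nth (jones_n_A K n) d1 \<noteq> 0" and d2: "fls_nth (jones_n_A K n) d2 \<noteq> 0"
  shows "d1 - d2 \<le> 4 * int (card (Cn K n))"
proof -
  let ?C = "Cn K n"
  have CC: "?C \<subseteq> crossings K" by (auto simp: Cn_def)
  have finC: "finite ?C" using CC by (auto simp: crossings_def intro: finite_subset)
  obtain s1 where s1: "s1 \<in> ?C \<rightarrow>\<^sub>E {0, 1}"
    and b1: "d1 + 3 * writhe K \<le> state_degree ?C s1 + 2 * int (ncomp K ?C s1 - 1)"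
    using d1 bracket_support[of K n "d1 + 3 * writhe K"] by (auto simp: fls_nth_jones_n_A)
  obtain s2 where s2: "s2 \<in> ?C \<rightarrow>\<^sub>E {0, 1}"
    and b2: "state_degree ?C s2 - 2 * int (ncomp K ?C s2 - 1) \<le> d2 + 3 * writhe K"
    using d2 bracket_support[of K n "d2 + 3 * writhe K"] by (auto simp: fls_nth_jones_n_A)
  have "ncomp K ?C s1 \<ge> 1" "ncomp K ?C s2 \<ge> 1" using ncomp_pos[OF gd] by auto
  moreover have "ncomp K ?C s1 + ncomp K ?C s2 + card {c \<in> ?C. s1 c \<noteq> s2 c} \<le> 2 + 2 * card ?C"
    by (rule ncomp_states_bound[OF gd CC s1 s2])
  moreover have "state_degree ?C s1 - state_degree ?C s2 \<le> 2 * int (card {c \<in> ?C. s1 c \<noteq> s2 c})"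
    by (rule state_degree_diff[OF finC s1 s2])
  ultimately show ?thesis using b1 b2 by (simp add: of_nat_diff)
qed

text \<open>Under \<open>A = t\<^sup>-\<^sup>1\<^sup>/\<^sup>4\<close> exponents of \<open>t\<close> are those of \<open>A\<close> divided by \<open>-4\<close>.\<close>

lemma t_span_le:
  fixes f :: "int fls"
  assumes width: "\<And>d1 d2. fls_nth f d1 \<noteq> 0 \<Longrightarrow> fls_nth f d2 \<noteq> 0 \<Longrightarrow> d1 - d2 \<le> 4 * int k"
  shows "t_span f \<le> real k"
proof (cases "f = 0")
  case False
  then obtain d0 where d0: "fls_nth f d0 \<noteq> 0" using fls_nonzero_nth by blast
  define S where "S = {d. fls_nth f d \<noteq> 0}"
  have "S \<subseteq> {d0 - 4 * int k .. d0 + 4 * int k}"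
    using width d0 by (force simp: S_def)
  then have finS: "finite S" by (rule finite_subset) simp
  have T: "t_exponents f = (\<lambda>e. - real_of_int e / 4) ` S" by (auto simp: t_exponents_def S_def)
  then have finT: "finite (t_exponents f)" and neT: "t_exponents f \<noteq> {}"
    using finS d0 by (auto simp: S_def)
  obtain a where a: "a \<in> S" "Max (t_exponents f) = - real_of_int a / 4"
    using Max_in[OF finT neT] T by auto
  obtain b where b: "b \<in> S" "Min (t_exponents f) = - real_of_int b / 4"
    using Min_in[OF finT neT] T by auto
  have "b - a \<le> 4 * int k" using width a b by (simp add: S_def)
  then have "real_of_int (b - a) \<le> real_of_int (4 * int k)" by linarith
  then show ?thesis using a b False by (simp add: t_span_def)
qed (simp add: t_span_def)

theorem proposition4p2:
  fixes K :: gauss and n :: nat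
  assumes "gauss_diagram K"
  shows "real (card (Cn K n)) \<ge> t_span (jones_n_A K n)"
  using t_span_le jones_support_width[OF assms] by blast

end
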